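(* $W'_{\mathrm{tw}}(C_4)=4$.
   Context: Graphs are finite simple graphs; $C_4$ is the cycle on 4 vertices. A graph is 2-connected if it has more than 2 vertices, is connected, and remains connected after removal of any single vertex. We use first-order logic of graphs with relation symbols for adjacency and equality only; the variable width of a sentence is the number of distinct variables it uses. For a graph $F$, $W'_{\mathrm{tw}}(F)$ is the minimum $m$ for which there are a first-order sentence $\Phi$ of variable width $m$ and an integer $k$ such that for every 2-connected graph $G$ of treewidth at least $k$, $G\models\Phi$ if and only if $G$ contains a (not necessarily induced) subgraph isomorphic to $F$. *)

theory Defs
  imports Main
begin

definition simple_graph :: "nat set \<Rightarrow> (nat \<Rightarrow> nat \<Rightarrow> bool) \<Rightarrow> bool" where
  "simple_graph V E \<longleftrightarrow> finite V \<and>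
     (\<forall>u v. E u v \<longrightarrow> u \<in> V \<and> v \<in> V \<and> u \<noteq> v \<and> E v u)"

text \<open>The vertex set S induces a connected subgraph (empty S counts as connected).\<close>
definition connected_on :: "(nat \<Rightarrow> nat \<Rightarrow> bool) \<Rightarrow> nat set \<Rightarrow> bool" where
  "connected_on E S \<longleftrightarrow>
     (\<forall>u\<in>S. \<forall>w\<in>S. (\<lambda>x y. x \<in> S \<and> y \<in> S \<and> E x y)\<^sup>*\<^sup>* u w)"

definition connected_graph :: "nat set \<Rightarrow> (nat \<Rightarrow> nat \<Rightarrow> bool) \<Rightarrow> bool" where
  "connected_graph V E \<longleftrightarrow> V \<noteq> {} \<and> connected_on E V"

definition two_connected :: "nat set \<Rightarrow> (nat \<Rightarrow> nat \<Rightarrow> bool) \<Rightarrow> bool" where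
  "two_connected V E \<longleftrightarrow> card V > 2 \<and> connected_graph V E \<and>
     (\<forall>v\<in>V. connected_graph (V - {v}) E)"

definition contains_subgraph ::
  "nat set \<Rightarrow> (nat \<Rightarrow> nat \<Rightarrow> bool) \<Rightarrow> nat set \<Rightarrow> (nat \<Rightarrow> nat \<Rightarrow> bool) \<Rightarrow> bool" where
  "contains_subgraph V E VF EF \<longleftrightarrow>
     (\<exists>f. inj_on f VF \<and> f ` VF \<subseteq> V \<and>
          (\<forall>u\<in>VF. \<forall>w\<in>VF. EF u w \<longrightarrow> E (f u) (f w)))"

definition C4_V :: "nat set" where "C4_V = {0, 1, 2, 3}"
definition C4_E :: "nat \<Rightarrow> nat \<Rightarrow> bool" where
  "C4_E i j \<longleftrightarrow> i \<in> C4_V \<and> j \<in> C4_V \<and> (j = (i + 1) mod 4 \<or> i = (j + 1) mod 4)"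

definition has_cycle :: "nat set \<Rightarrow> (nat \<Rightarrow> nat \<Rightarrow> bool) \<Rightarrow> bool" where
  "has_cycle N TE \<longleftrightarrow> (\<exists>xs. length xs \<ge> 3 \<and> distinct xs \<and> set xs \<subseteq> N \<and>
      (\<forall>i. Suc i < length xs \<longrightarrow> TE (xs ! i) (xs ! Suc i)) \<and> TE (last xs) (hd xs))"

definition is_tree :: "nat set \<Rightarrow> (nat \<Rightarrow> nat \<Rightarrow> bool) \<Rightarrow> bool" where
  "is_tree N TE \<longleftrightarrow> simple_graph N TE \<and> connected_graph N TE \<and> \<not> has_cycle N TE"

definition tree_decomposition ::
  "nat set \<Rightarrow> (nat \<Rightarrow> nat \<Rightarrow> bool) \<Rightarrow> nat set \<Rightarrow> (nat \<Rightarrow> nat \<Rightarrow> bool) \<Rightarrow> (nat \<Rightarrow> nat set) \<Rightarrow> bool"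
  where
  "tree_decomposition V E N TE B \<longleftrightarrow> is_tree N TE \<and>
     (\<forall>t\<in>N. B t \<subseteq> V) \<and>
     (\<forall>v\<in>V. \<exists>t\<in>N. v \<in> B t) \<and>
     (\<forall>u v. E u v \<longrightarrow> (\<exists>t\<in>N. u \<in> B t \<and> v \<in> B t)) \<and>
     (\<forall>v\<in>V. connected_on TE {t \<in> N. v \<in> B t})"

definition decomp_width :: "nat set \<Rightarrow> (nat \<Rightarrow> nat set) \<Rightarrow> nat" where
  "decomp_width N B = Max ((\<lambda>t. card (B t)) ` N) - 1"

definition treewidth :: "nat set \<Rightarrow> (nat \<Rightarrow> nat \<Rightarrow> bool) \<Rightarrow> nat" where
  "treewidth V E = (LEAST w. \<exists>N TE B. tree_decomposition V E N TE B \<and> decomp_width N B = w)"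

datatype fo = Adj nat nat | Eq nat nat | Tru | Fls | Neg fo | Conj fo fo | Disj fo fo
  | Imp fo fo | Iff fo fo | Ex nat fo | All nat fo

fun vars :: "fo \<Rightarrow> nat set" where
  "vars (Adj x y) = {x, y}"
| "vars (Eq x y) = {x, y}"
| "vars Tru = {}"
| "vars Fls = {}"
| "vars (Neg p) = vars p"
| "vars (Conj p q) = vars p \<union> vars q"
| "vars (Disj p q) = vars p \<union> vars q"
| "vars (Imp p q) = vars p \<union> vars q"
| "vars (Iff p q) = vars p \<union> vars q"
| "vars (Ex x p) = insert x (vars p)"
| "vars (All x p) = insert x (vars p)"

fun free_vars :: "fo \<Rightarrow> nat set" where
  "free_vars (Adj x y) = {x, y}"
| "free_vars (Eq x y) = {x, y}"
| "free_vars Tru = {}"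
| "free_vars Fls = {}"
| "free_vars (Neg p) = free_vars p"
| "free_vars (Conj p q) = free_vars p \<union> free_vars q"
| "free_vars (Disj p q) = free_vars p \<union> free_vars q"
| "free_vars (Imp p q) = free_vars p \<union> free_vars q"
| "free_vars (Iff p q) = free_vars p \<union> free_vars q"
| "free_vars (Ex x p) = free_vars p - {x}"
| "free_vars (All x p) = free_vars p - {x}"

definition sentence :: "fo \<Rightarrow> bool" where "sentence p \<longleftrightarrow> free_vars p = {}"

definition var_width :: "fo \<Rightarrow> nat" where "var_width p = card (vars p)"

fun sat :: "nat set \<Rightarrow> (nat \<Rightarrow> nat \<Rightarrow> bool) \<Rightarrow> (nat \<Rightarrow> nat) \<Rightarrow> fo \<Rightarrow> bool" where
  "sat V E a (Adj x y) = E (a x) (a y)"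
| "sat V E a (Eq x y) = (a x = a y)"
| "sat V E a Tru = True"
| "sat V E a Fls = False"
| "sat V E a (Neg p) = (\<not> sat V E a p)"
| "sat V E a (Conj p q) = (sat V E a p \<and> sat V E a q)"
| "sat V E a (Disj p q) = (sat V E a p \<or> sat V E a q)"
| "sat V E a (Imp p q) = (sat V E a p \<longrightarrow> sat V E a q)"
| "sat V E a (Iff p q) = (sat V E a p \<longleftrightarrow> sat V E a q)"
| "sat V E a (Ex x p) = (\<exists>v\<in>V. sat V E (a(x := v)) p)"
| "sat V E a (All x p) = (\<forall>v\<in>V. sat V E (a(x := v)) p)"

definition models :: "nat set \<Rightarrow> (nat \<Rightarrow> nat \<Rightarrow> bool) \<Rightarrow> fo \<Rightarrow> bool" where
  "models V E p \<longleftrightarrow> (\<forall>a. sat V E a p)"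

definition W'_tw :: "nat set \<Rightarrow> (nat \<Rightarrow> nat \<Rightarrow> bool) \<Rightarrow> nat" where
  "W'_tw VF EF = (LEAST m. \<exists>\<Phi> k. sentence \<Phi> \<and> var_width \<Phi> = m \<and>
      (\<forall>V E. simple_graph V E \<and> two_connected V E \<and> treewidth V E \<ge> k \<longrightarrow>
         (models V E \<Phi> \<longleftrightarrow> contains_subgraph V E VF EF)))"

end

(*
  The sentence asserting four vertices v0, v1, v2, v3 with v0 \<noteq> v2, v1 \<noteq> v3 and edges
  v0 v1, v1 v2, v2 v3, v3 v0 detects C4 in every graph, so four variables suffice.

  For the lower bound, call a finite bipartite graph rich if for any two vertices u1, u2 and any
  types (equal, adjacent, same side, opposite side) that a third vertex could have towards u1 and
  u2 in a bipartite graph, some vertex has exactly these types. A back-and-forth argument shows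
  that two rich graphs satisfy the same sentences with three variables. Rich graphs are
  2-connected, and the treewidth of a graph is at least its minimum degree. The bipartite graph on
  two copies of [n] \<times> [n] joining vertices that differ in both coordinates is rich and contains
  C4, while the point-line incidence graph of the projective plane over the integers modulo a
  prime is rich and C4-free. Both have unbounded minimum degree, so no three-variable sentence
  detects C4 among 2-connected graphs of large treewidth.
*)

theory Submission
  imports Defs "HOL-Number_Theory.Cong"
begin

section \<open>Types of vertex pairs and the extension property\<close>

datatype pair_type = Equal | Adjacent | Same_Side | Opposite_Side

definition type_of_pair :: "('a \<Rightarrow> bool) \<Rightarrow> ('a \<Rightarrow> 'a \<Rightarrow> bool) \<Rightarrow> 'a \<Rightarrow> 'a \<Rightarrow> pair_type" where
  "type_of_pair side R u v =
     (if u = v then Equal else if R u v then Adjacent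
      else if side u = side v then Same_Side else Opposite_Side)"

fun same_side_type :: "pair_type \<Rightarrow> bool" where
  "same_side_type Equal = True"
| "same_side_type Same_Side = True"
| "same_side_type Adjacent = False"
| "same_side_type Opposite_Side = False"

text \<open>The types of (u1, z) and (u2, z) that can occur in a bipartite graph when (u1, u2) has type t12.\<close>

definition consistent_types :: "pair_type \<Rightarrow> pair_type \<Rightarrow> pair_type \<Rightarrow> bool" where
  "consistent_types t1 t2 t12 \<longleftrightarrow>
     (if t12 = Equal then t1 = t2
      else (t1 = Equal \<longrightarrow> t2 = t12) \<and> (t2 = Equal \<longrightarrow> t1 = t12) \<and>
        (same_side_type t12 \<longleftrightarrow> (same_side_type t1 \<longleftrightarrow> same_side_type t2)))"

definition bipartite :: "('a \<Rightarrow> bool) \<Rightarrow> ('a \<Rightarrow> 'a \<Rightarrow> bool) \<Rightarrow> bool" where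
  "bipartite side R \<longleftrightarrow> (\<forall>u v. R u v \<longrightarrow> R v u \<and> side u \<noteq> side v)"

definition extension_property :: "'a set \<Rightarrow> ('a \<Rightarrow> bool) \<Rightarrow> ('a \<Rightarrow> 'a \<Rightarrow> bool) \<Rightarrow> bool" where
  "extension_property X side R \<longleftrightarrow>
     (\<forall>u1\<in>X. \<forall>u2\<in>X. \<forall>t1 t2. consistent_types t1 t2 (type_of_pair side R u1 u2) \<longrightarrow>
        (\<exists>z\<in>X. type_of_pair side R u1 z = t1 \<and> type_of_pair side R u2 z = t2))"

lemma extension_propertyD:
  assumes "extension_property X side R" "u1 \<in> X" "u2 \<in> X"
    and "consistent_types t1 t2 (type_of_pair side R u1 u2)"
  obtains z where "z \<in> X" "type_of_pair side R u1 z = t1" "type_of_pair side R u2 z = t2"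
  using assms unfolding extension_property_def by blast

lemma type_of_pair_Equal_iff [simp]: "type_of_pair side R u v = Equal \<longleftrightarrow> u = v"
  by (simp add: type_of_pair_def)

lemma type_of_pair_self [simp]: "type_of_pair side R u u = Equal"
  by (simp add: type_of_pair_def)

context
  fixes side :: "'a \<Rightarrow> bool" and R :: "'a \<Rightarrow> 'a \<Rightarrow> bool"
  assumes bip: "bipartite side R"
begin

lemma bipartite_irrefl: "\<not> R u u"
  using bip unfolding bipartite_def by blast

lemma type_of_pair_commute: "type_of_pair side R u v = type_of_pair side R v u"
  using bip unfolding type_of_pair_def bipartite_def by auto

lemma type_of_pair_Adjacent_iff: "type_of_pair side R u v = Adjacent \<longleftrightarrow> R u v"
  using bipartite_irrefl by (auto simp: type_of_pair_def)

lemma type_of_pair_Same_Side_iff: "type_of_pair side R u v = Same_Side \<longleftrightarrow> u \<noteq> v \<and> side u = side v"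
  using bip unfolding type_of_pair_def bipartite_def by auto

lemma type_of_pair_Opposite_Side_iff:
  "type_of_pair side R u v = Opposite_Side \<longleftrightarrow> \<not> R u v \<and> side u \<noteq> side v"
  by (auto simp: type_of_pair_def)

lemma same_side_type_of_pair: "same_side_type (type_of_pair side R u v) \<longleftrightarrow> side u = side v"
  using bip unfolding type_of_pair_def bipartite_def by auto

lemma consistent_type_of_pair:
  "consistent_types (type_of_pair side R u1 z) (type_of_pair side R u2 z) (type_of_pair side R u1 u2)"
  using type_of_pair_commute[of u2 u1]
  by (auto simp: consistent_types_def same_side_type_of_pair)

end

definition realizes :: "'a set \<Rightarrow> ('a \<Rightarrow> bool) \<Rightarrow> ('a \<Rightarrow> 'a \<Rightarrow> bool) \<Rightarrow> 'a \<Rightarrow> 'a \<Rightarrow>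
    pair_type \<Rightarrow> pair_type \<Rightarrow> bool" where
  "realizes X side R x y t1 t2 \<longleftrightarrow> (\<exists>z\<in>X. type_of_pair side R x z = t1 \<and> type_of_pair side R y z = t2)"

lemma realizesI: "z \<in> X \<Longrightarrow> type_of_pair side R x z = t1 \<Longrightarrow> type_of_pair side R y z = t2 \<Longrightarrow>
    realizes X side R x y t1 t2"
  unfolding realizes_def by blast

lemma realizes_swap: "realizes X side R x y t1 t2 \<longleftrightarrow> realizes X side R y x t2 t1"
  unfolding realizes_def by blast

lemma extension_propertyI:
  assumes bip: "bipartite side R"
    and single: "\<And>x. x \<in> X \<Longrightarrow> realizes X side R x x Adjacent Adjacent \<and>
      realizes X side R x x Same_Side Same_Side \<and> realizes X side R x x Opposite_Side Opposite_Side"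
    and same_side: "\<And>x y. x \<in> X \<Longrightarrow> y \<in> X \<Longrightarrow> x \<noteq> y \<Longrightarrow> side x = side y \<Longrightarrow>
      realizes X side R x y Adjacent Adjacent \<and> realizes X side R x y Same_Side Same_Side \<and>
      realizes X side R x y Opposite_Side Opposite_Side \<and> realizes X side R x y Adjacent Opposite_Side"
    and opposite_side: "\<And>x y. x \<in> X \<Longrightarrow> y \<in> X \<Longrightarrow> side x \<noteq> side y \<Longrightarrow>
      realizes X side R x y Same_Side Adjacent \<and> realizes X side R x y Same_Side Opposite_Side"
  shows "extension_property X side R"
  unfolding extension_property_def
proof (intro ballI allI impI)
  fix x y t1 t2
  assume x: "x \<in> X" and y: "y \<in> X" and cons: "consistent_types t1 t2 (type_of_pair side R x y)"
  have Equal: "realizes X side R x y Equal (type_of_pair side R x y)"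
    "realizes X side R x y (type_of_pair side R x y) Equal"
    using x y type_of_pair_commute[OF bip, of y x] by (auto intro: realizesI)
  have "realizes X side R x y t1 t2"
  proof (cases "x = y")
    case True
    then show ?thesis using single[OF x] Equal cons by (cases t1) (simp_all add: consistent_types_def)
  next
    case False
    show ?thesis
    proof (cases "side x = side y")
      case True
      then show ?thesis
        using same_side[OF x y False True] same_side[OF y x] False Equal cons
          realizes_swap[of X side R y x Adjacent Opposite_Side]
          type_of_pair_Same_Side_iff[OF bip, of x y]
        by (cases t1; cases t2) (simp_all add: consistent_types_def)
    next
      case opposite: False
      then have "\<not> same_side_type (type_of_pair side R x y)" by (simp add: same_side_type_of_pair[OF bip])
      then show ?thesis
        using opposite_side[OF x y opposite] opposite_side[OF y x] opposite False Equal cons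
          realizes_swap[of X side R y x Same_Side Adjacent] realizes_swap[of X side R y x Same_Side Opposite_Side]
        by (cases t1; cases t2) (simp_all add: consistent_types_def)
    qed
  qed
  then show "\<exists>z\<in>X. type_of_pair side R x z = t1 \<and> type_of_pair side R y z = t2"
    unfolding realizes_def .
qed

section \<open>Three-variable sentences cannot separate graphs with the extension property\<close>

lemma finite_vars: "finite (vars p)"
  by (induction p) auto

lemma sat_cong_free_vars:
  "\<forall>x\<in>free_vars p. a x = b x \<Longrightarrow> sat V E a p = sat V E b p"
proof (induction p arbitrary: a b)
  case (Ex x p)
  have "sat V E (a(x := v)) p = sat V E (b(x := v)) p" for v
    using Ex.prems by (intro Ex.IH) auto
  then show ?case by simp
next
  case (All x p)
  have "sat V E (a(x := v)) p = sat V E (b(x := v)) p" for v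
    using All.prems by (intro All.IH) auto
  then show ?case by simp
qed (simp_all only: free_vars.simps sat.simps ball_Un ball_simps, blast+)

definition types_agree ::
  "'v set \<Rightarrow> ('a \<Rightarrow> bool) \<Rightarrow> ('a \<Rightarrow> 'a \<Rightarrow> bool) \<Rightarrow> ('v \<Rightarrow> 'a) \<Rightarrow>
   ('b \<Rightarrow> bool) \<Rightarrow> ('b \<Rightarrow> 'b \<Rightarrow> bool) \<Rightarrow> ('v \<Rightarrow> 'b) \<Rightarrow> bool" where
  "types_agree S side R a side' R' a' \<longleftrightarrow>
     (\<forall>y\<in>S. \<forall>w\<in>S. type_of_pair side R (a y) (a w) = type_of_pair side' R' (a' y) (a' w))"

lemma types_agree_sym:
  "types_agree S side R a side' R' a' \<longleftrightarrow> types_agree S side' R' a' side R a"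
  unfolding types_agree_def by metis

lemma card_le_2_obtain:
  assumes "finite A" "card A \<le> 2" "A \<noteq> {}"
  obtains y1 y2 where "A = {y1, y2}"
  using assms by (metis Suc_1 bot_nat_0.extremum_uniqueI card_0_eq card_1_singletonE
      card_2_iff insert_absorb2 le_SucE numeral_1_eq_Suc_0 numeral_eq_one_iff)

text \<open>When the value of x changes, only the types towards the at most two other variables have to
  be preserved; this is why three variables cannot see more than the extension property.\<close>

lemma types_agree_extend:
  assumes ext: "extension_property X' side' R'" and ne: "X' \<noteq> {}"
    and bip: "bipartite side R" and bip': "bipartite side' R'"
    and fin: "finite S" and card: "card (S - {x}) \<le> 2" and img: "a' ` S \<subseteq> X'"
    and agree: "types_agree S side R a side' R' a'"
  shows "\<exists>v'\<in>X'. types_agree S side R (a(x := v)) side' R' (a'(x := v'))"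
proof -
  let ?t = "type_of_pair side R" and ?t' = "type_of_pair side' R'"
  have agreeD: "?t (a y) (a w) = ?t' (a' y) (a' w)" if "y \<in> S" "w \<in> S" for y w
    using agree that unfolding types_agree_def by blast
  have "\<exists>v'\<in>X'. \<forall>y\<in>S - {x}. ?t (a y) v = ?t' (a' y) v'"
  proof (cases "S - {x} = {}")
    case True
    then show ?thesis using ne by auto
  next
    case False
    then obtain y1 y2 where y: "S - {x} = {y1, y2}"
      using card fin card_le_2_obtain[of "S - {x}"] by blast
    then have "y1 \<in> S" "y2 \<in> S" by auto
    then have "consistent_types (?t (a y1) v) (?t (a y2) v) (?t' (a' y1) (a' y2))"
      using consistent_type_of_pair[OF bip, of "a y1" v "a y2"] agreeD by simp
    moreover have "a' y1 \<in> X'" "a' y2 \<in> X'" using img \<open>y1 \<in> S\<close> \<open>y2 \<in> S\<close> by auto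
    ultimately obtain v' where "v' \<in> X'" "?t' (a' y1) v' = ?t (a y1) v" "?t' (a' y2) v' = ?t (a y2) v"
      using extension_propertyD[OF ext] by metis
    then show ?thesis unfolding y by (intro bexI[of _ v']) auto
  qed
  then obtain v' where "v' \<in> X'" and new: "\<And>y. y \<in> S \<Longrightarrow> y \<noteq> x \<Longrightarrow> ?t (a y) v = ?t' (a' y) v'"
    by blast
  moreover have "types_agree S side R (a(x := v)) side' R' (a'(x := v'))"
    unfolding types_agree_def
  proof (intro ballI)
    fix y w assume "y \<in> S" "w \<in> S"
    then show "?t ((a(x := v)) y) ((a(x := v)) w) = ?t' ((a'(x := v')) y) ((a'(x := v')) w)"
      using new[of y] new[of w] agreeD[of y w] type_of_pair_commute[OF bip, of v "a w"]
        type_of_pair_commute[OF bip', of v' "a' w"]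
      by (cases "y = x"; cases "w = x") simp_all
  qed
  ultimately show ?thesis by blast
qed

lemma types_agree_back_and_forth:
  assumes bip: "bipartite side E" and bip': "bipartite side' E'"
    and ext: "extension_property V side E" and ext': "extension_property V' side' E'"
    and ne: "V \<noteq> {}" and ne': "V' \<noteq> {}" and S: "finite S" "card S \<le> 3" "x \<in> S"
    and img: "a ` S \<subseteq> V" "a' ` S \<subseteq> V'" and agree: "types_agree S side E a side' E' a'"
  shows "\<exists>v'\<in>V'. types_agree S side E (a(x := v)) side' E' (a'(x := v'))"
    and "\<exists>v\<in>V. types_agree S side E (a(x := v)) side' E' (a'(x := v'))"
proof -
  have card: "card (S - {x}) \<le> 2" using S by (simp add: card_Diff_singleton)
  show "\<exists>v'\<in>V'. types_agree S side E (a(x := v)) side' E' (a'(x := v'))"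
    by (rule types_agree_extend[OF ext' ne' bip bip' S(1) card img(2) agree])
  have "\<exists>v\<in>V. types_agree S side' E' (a'(x := v')) side E (a(x := v))"
    using agree types_agree_sym by (metis types_agree_extend[OF ext ne bip' bip S(1) card img(1)])
  then show "\<exists>v\<in>V. types_agree S side E (a(x := v)) side' E' (a'(x := v'))"
    using types_agree_sym by metis
qed

lemma quantifiers_cong_if_related:
  assumes "\<forall>v\<in>A. \<exists>v'\<in>B. Q v v'" "\<forall>v'\<in>B. \<exists>v\<in>A. Q v v'"
    and "\<And>v v'. v \<in> A \<Longrightarrow> v' \<in> B \<Longrightarrow> Q v v' \<Longrightarrow> P v \<longleftrightarrow> P' v'"
  shows "(\<exists>v\<in>A. P v) \<longleftrightarrow> (\<exists>v'\<in>B. P' v')" and "(\<forall>v\<in>A. P v) \<longleftrightarrow> (\<forall>v'\<in>B. P' v')"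
  using assms by blast+

lemma sat_eq_if_types_agree:
  assumes bip: "bipartite side E" and bip': "bipartite side' E'"
    and ext: "extension_property V side E" and ext': "extension_property V' side' E'"
    and ne: "V \<noteq> {}" and ne': "V' \<noteq> {}" and S: "finite S" "card S \<le> 3"
  shows "vars p \<subseteq> S \<Longrightarrow> a ` S \<subseteq> V \<Longrightarrow> a' ` S \<subseteq> V' \<Longrightarrow>
    types_agree S side E a side' E' a' \<Longrightarrow> sat V E a p = sat V' E' a' p"
proof (induction p arbitrary: a a')
  case (Adj x y)
  then have "type_of_pair side E (a x) (a y) = type_of_pair side' E' (a' x) (a' y)"
    unfolding types_agree_def by simp
  then show ?case
    using type_of_pair_Adjacent_iff[OF bip] type_of_pair_Adjacent_iff[OF bip'] by (metis sat.simps(1))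
next
  case (Eq x y)
  then have "type_of_pair side E (a x) (a y) = type_of_pair side' E' (a' x) (a' y)"
    unfolding types_agree_def by simp
  then show ?case by (metis sat.simps(2) type_of_pair_Equal_iff)
next
  case (Ex x p)
  have "x \<in> S" using Ex.prems(1) by simp
  note back_and_forth = types_agree_back_and_forth[OF assms this Ex.prems(2-4)]
  have "sat V E (a(x := v)) p = sat V' E' (a'(x := v')) p"
    if "v \<in> V" "v' \<in> V'" "types_agree S side E (a(x := v)) side' E' (a'(x := v'))" for v v'
  proof -
    have "(a(x := v)) ` S \<subseteq> V" "(a'(x := v')) ` S \<subseteq> V'"
      using Ex.prems(2,3) that(1,2) by (auto simp: image_subset_iff)
    then show ?thesis using Ex.IH Ex.prems(1) that(3) by simp
  qed
  then show ?case
    using quantifiers_cong_if_related[of V V' "\<lambda>v v'. types_agree S side E (a(x := v)) side' E' (a'(x := v'))"]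
      back_and_forth by simp
next
  case (All x p)
  have "x \<in> S" using All.prems(1) by simp
  note back_and_forth = types_agree_back_and_forth[OF assms this All.prems(2-4)]
  have "sat V E (a(x := v)) p = sat V' E' (a'(x := v')) p"
    if "v \<in> V" "v' \<in> V'" "types_agree S side E (a(x := v)) side' E' (a'(x := v'))" for v v'
  proof -
    have "(a(x := v)) ` S \<subseteq> V" "(a'(x := v')) ` S \<subseteq> V'"
      using All.prems(2,3) that(1,2) by (auto simp: image_subset_iff)
    then show ?thesis using All.IH All.prems(1) that(3) by simp
  qed
  then show ?case
    using quantifiers_cong_if_related[of V V' "\<lambda>v v'. types_agree S side E (a(x := v)) side' E' (a'(x := v'))"]
      back_and_forth by simp
qed auto

lemma models_iff_sat_const:
  assumes "sentence p"
  shows "models V E p \<longleftrightarrow> sat V E (\<lambda>_. v) p"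
  using sat_cong_free_vars[of p] assms unfolding models_def sentence_def by blast

theorem models_eq_if_extension_property:
  assumes bip: "bipartite side E" and bip': "bipartite side' E'"
    and ext: "extension_property V side E" and ext': "extension_property V' side' E'"
    and ne: "V \<noteq> {}" and ne': "V' \<noteq> {}"
    and p: "sentence p" "var_width p \<le> 3"
  shows "models V E p \<longleftrightarrow> models V' E' p"
proof -
  obtain v v' where v: "v \<in> V" "v' \<in> V'" using ne ne' by blast
  have "sat V E (\<lambda>_. v) p = sat V' E' (\<lambda>_. v') p"
    using sat_eq_if_types_agree[OF bip bip' ext ext' ne ne' finite_vars, of p p "\<lambda>_. v" "\<lambda>_. v'"]
      p(2) v unfolding var_width_def types_agree_def by auto
  then show ?thesis using models_iff_sat_const[OF p(1)] by blast
qed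

section \<open>Treewidth is at least the minimum degree\<close>

definition without_node :: "(nat \<Rightarrow> nat \<Rightarrow> bool) \<Rightarrow> nat \<Rightarrow> nat \<Rightarrow> nat \<Rightarrow> bool" where
  "without_node TE t x y \<longleftrightarrow> TE x y \<and> x \<noteq> t \<and> y \<noteq> t"

lemma connected_on_without_leaf:
  assumes conn: "connected_on TE S" and leaf: "\<And>x. TE t x \<Longrightarrow> x = s"
    and sym: "\<And>x y. TE x y \<Longrightarrow> TE y x"
  shows "connected_on (without_node TE t) (S - {t})"
proof -
  let ?R = "\<lambda>x y. x \<in> S \<and> y \<in> S \<and> TE x y"
  let ?R' = "\<lambda>x y. x \<in> S - {t} \<and> y \<in> S - {t} \<and> without_node TE t x y"
  have "(w \<noteq> t \<longrightarrow> ?R'\<^sup>*\<^sup>* u w) \<and> (w = t \<longrightarrow> s \<in> S \<and> s \<noteq> t \<and> ?R'\<^sup>*\<^sup>* u s)"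
    if "?R\<^sup>*\<^sup>* u w" "u \<in> S" "u \<noteq> t" for u w
    using that(1)
  proof (induction rule: rtranclp_induct)
    case base
    then show ?case using that by auto
  next
    case (step y z)
    then have yz: "TE y z" "y \<in> S" "z \<in> S" by auto
    show ?case
    proof (cases "y = t")
      case True
      then show ?thesis using step yz leaf by auto
    next
      case False
      show ?thesis
      proof (cases "z = t")
        case True
        then show ?thesis using False step yz leaf sym by blast
      next
        case False2: False
        then have "?R' y z" using False yz by (auto simp: without_node_def)
        then show ?thesis using step.IH False False2 by (auto intro: rtranclp.rtrancl_into_rtrancl)
      qed
    qed
  qed
  then show ?thesis using conn unfolding connected_on_def by blast
qed

definition is_path :: "nat set \<Rightarrow> (nat \<Rightarrow> nat \<Rightarrow> bool) \<Rightarrow> nat list \<Rightarrow> bool" where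
  "is_path N TE xs \<longleftrightarrow> distinct xs \<and> set xs \<subseteq> N \<and> (\<forall>i. Suc i < length xs \<longrightarrow> TE (xs ! i) (xs ! Suc i))"

lemma longest_path_exists:
  assumes "finite N" "is_path N TE ys"
  obtains xs where "is_path N TE xs" "\<And>zs. is_path N TE zs \<Longrightarrow> length zs \<le> length xs"
proof -
  have "length zs < Suc (card N)" if "is_path N TE zs" for zs
    using that assms(1) unfolding is_path_def by (metis card_mono distinct_card le_imp_less_Suc)
  then show thesis
    using ex_has_greatest_nat[of "is_path N TE" ys length "Suc (card N)"] assms(2) that by blast
qed

lemma is_path_Cons:
  assumes "is_path N TE xs" "xs \<noteq> []" "x \<notin> set xs" "x \<in> N" "TE x (hd xs)"
  shows "is_path N TE (x # xs)"
  using assms unfolding is_path_def by (auto simp: nth_Cons hd_conv_nth split: nat.split)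

lemma has_cycle_if_path_chord:
  assumes path: "is_path N TE xs" and j: "j < length xs" "2 \<le> j" and chord: "TE (xs ! j) (xs ! 0)"
  shows "has_cycle N TE"
  unfolding has_cycle_def
proof (intro exI[of _ "take (Suc j) xs"] conjI allI impI)
  show "3 \<le> length (take (Suc j) xs)" "distinct (take (Suc j) xs)" "set (take (Suc j) xs) \<subseteq> N"
    using path j unfolding is_path_def by (auto dest: in_set_takeD)
  show "TE (take (Suc j) xs ! i) (take (Suc j) xs ! Suc i)" if "Suc i < length (take (Suc j) xs)" for i
    using path that unfolding is_path_def by auto
  have "last (take (Suc j) xs) = xs ! j" using j by (simp add: take_Suc_conv_app_nth)
  moreover have "hd (take (Suc j) xs) = xs ! 0" using j by (cases xs) auto
  ultimately show "TE (last (take (Suc j) xs)) (hd (take (Suc j) xs))" using chord by simp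
qed

lemma longest_path_starts_at_leaf:
  assumes sg: "simple_graph N TE" and acyclic: "\<not> has_cycle N TE"
    and path: "is_path N TE xs" and longest: "\<And>zs. is_path N TE zs \<Longrightarrow> length zs \<le> length xs"
    and len: "2 \<le> length xs" and edge: "TE (xs ! 0) x"
  shows "x = xs ! 1"
proof (rule ccontr)
  assume "x \<noteq> xs ! 1"
  have "x \<in> N" "TE x (xs ! 0)" "x \<noteq> xs ! 0" using sg edge unfolding simple_graph_def by auto
  show False
  proof (cases "x \<in> set xs")
    case False
    moreover have "hd xs = xs ! 0" using len by (cases xs) auto
    ultimately have "is_path N TE (x # xs)"
      using path len \<open>x \<in> N\<close> \<open>TE x (xs ! 0)\<close> by (intro is_path_Cons) auto
    then show False using longest by fastforce
  next
    case True
    then obtain j where "j < length xs" "xs ! j = x" by (metis in_set_conv_nth)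
    moreover have "j \<noteq> 0" "j \<noteq> 1" using calculation \<open>x \<noteq> xs ! 1\<close> \<open>x \<noteq> xs ! 0\<close> by metis+
    then have "2 \<le> j" by linarith
    ultimately show False using has_cycle_if_path_chord[OF path] \<open>TE x (xs ! 0)\<close> acyclic by blast
  qed
qed

lemma tree_has_leaf:
  assumes tree: "is_tree N TE" and two: "card N \<ge> 2"
  shows "\<exists>t\<in>N. \<exists>s\<in>N. TE t s \<and> (\<forall>x. TE t x \<longrightarrow> x = s)"
proof -
  have sg: "simple_graph N TE" and conn: "connected_on TE N" and acyclic: "\<not> has_cycle N TE"
    using tree unfolding is_tree_def connected_graph_def by auto
  have fin: "finite N" using sg unfolding simple_graph_def by auto
  obtain T where "T \<subseteq> N" "card T = 2" using obtain_subset_with_card_n[OF two] by blast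
  then obtain u w where uw: "u \<in> N" "w \<in> N" "u \<noteq> w" by (auto simp: card_2_iff)
  then have "(\<lambda>x y. x \<in> N \<and> y \<in> N \<and> TE x y)\<^sup>*\<^sup>* u w" using conn unfolding connected_on_def by blast
  then obtain y where y: "TE u y" using uw(3) by (cases rule: converse_rtranclpE) auto
  then have "is_path N TE [u, y]"
    using sg unfolding is_path_def simple_graph_def by (auto simp: less_Suc_eq nth_Cons')
  then obtain xs where path: "is_path N TE xs" and longest: "\<And>zs. is_path N TE zs \<Longrightarrow> length zs \<le> length xs"
    using longest_path_exists[OF fin] by blast
  then have len: "2 \<le> length xs" using \<open>is_path N TE [u, y]\<close> by fastforce
  then have edge: "TE (xs ! 0) (xs ! 1)" using path unfolding is_path_def by auto
  then have "xs ! 0 \<in> N" "xs ! 1 \<in> N" using sg unfolding simple_graph_def by auto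
  moreover have "x = xs ! 1" if "TE (xs ! 0) x" for x
    using longest_path_starts_at_leaf[OF sg acyclic path _ len that] longest by blast
  ultimately show ?thesis using edge by blast
qed

lemma tree_without_leaf:
  assumes tree: "is_tree N TE" and t: "t \<in> N" "s \<in> N" "TE t s" and leaf: "\<And>x. TE t x \<Longrightarrow> x = s"
  shows "is_tree (N - {t}) (without_node TE t)"
  unfolding is_tree_def
proof (intro conjI)
  have sg: "simple_graph N TE" and conn: "connected_graph N TE" and acyclic: "\<not> has_cycle N TE"
    using tree unfolding is_tree_def by auto
  then show "simple_graph (N - {t}) (without_node TE t)"
    unfolding simple_graph_def without_node_def by auto
  have "s \<noteq> t" using sg t unfolding simple_graph_def by blast
  then show "connected_graph (N - {t}) (without_node TE t)"
    using conn connected_on_without_leaf[OF _ leaf] sg t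
    unfolding connected_graph_def simple_graph_def by blast
  show "\<not> has_cycle (N - {t}) (without_node TE t)"
    using acyclic unfolding has_cycle_def without_node_def by blast
qed

lemma tree_decomposition_without_leaf:
  assumes td: "tree_decomposition V E N TE B"
    and t: "t \<in> N" "s \<in> N" "TE t s" and leaf: "\<And>x. TE t x \<Longrightarrow> x = s" and bag: "B t \<subseteq> B s"
  shows "tree_decomposition V E (N - {t}) (without_node TE t) B"
proof -
  have tree: "is_tree N TE" and bags: "\<forall>t\<in>N. B t \<subseteq> V"
    and cover: "\<forall>v\<in>V. \<exists>t\<in>N. v \<in> B t"
    and edges: "\<forall>u v. E u v \<longrightarrow> (\<exists>t\<in>N. u \<in> B t \<and> v \<in> B t)"
    and conn: "\<forall>v\<in>V. connected_on TE {t \<in> N. v \<in> B t}"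
    using td unfolding tree_decomposition_def by blast+
  have sym: "\<And>x y. TE x y \<Longrightarrow> TE y x" and "s \<noteq> t"
    using tree t unfolding is_tree_def simple_graph_def by blast+
  have lift: "\<exists>t'\<in>N - {t}. X \<subseteq> B t'" if "\<exists>t'\<in>N. X \<subseteq> B t'" for X
    using that bag t(2) \<open>s \<noteq> t\<close> by (metis Diff_iff singletonD subset_trans)
  have "\<exists>t'\<in>N - {t}. v \<in> B t'" if "v \<in> V" for v
    using lift[of "{v}"] cover that by simp
  moreover have "\<exists>t'\<in>N - {t}. u \<in> B t' \<and> v \<in> B t'" if "E u v" for u v
    using lift[of "{u, v}"] edges that by simp
  moreover have "connected_on (without_node TE t) {t' \<in> N - {t}. v \<in> B t'}" if "v \<in> V" for v
  proof -
    have "{t' \<in> N - {t}. v \<in> B t'} = {t' \<in> N. v \<in> B t'} - {t}" by blast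
    then show ?thesis using conn that connected_on_without_leaf[OF _ leaf sym] by simp
  qed
  ultimately show ?thesis
    using tree_without_leaf[of N TE t s] tree t leaf bags unfolding tree_decomposition_def by blast
qed

lemma tree_decomposition_private_vertex:
  assumes td: "tree_decomposition V E N TE B"
    and t: "t \<in> N" and leaf: "\<And>x. TE t x \<Longrightarrow> x = s" and v: "v \<in> B t" "v \<notin> B s"
  shows "\<forall>t'\<in>N. v \<in> B t' \<longrightarrow> t' = t"
proof (intro ballI impI)
  fix t' assume t': "t' \<in> N" "v \<in> B t'"
  let ?T = "{t \<in> N. v \<in> B t}"
  have "v \<in> V" using td t v unfolding tree_decomposition_def by blast
  then have "connected_on TE ?T" using td unfolding tree_decomposition_def by blast
  then have "(\<lambda>x y. x \<in> ?T \<and> y \<in> ?T \<and> TE x y)\<^sup>*\<^sup>* t t'"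
    using t t' v unfolding connected_on_def by blast
  then show "t' = t"
    by (cases rule: converse_rtranclpE) (use leaf v in auto)
qed

lemma card_bag_ge_degree:
  assumes sg: "simple_graph V E" and td: "tree_decomposition V E N TE B"
    and t: "t \<in> N" "v \<in> B t" and only: "\<forall>t'\<in>N. v \<in> B t' \<longrightarrow> t' = t"
  shows "card {w. E v w} + 1 \<le> card (B t)"
proof -
  have "w \<in> B t" if vw: "E v w" for w
  proof -
    obtain t' where "t' \<in> N" "v \<in> B t'" "w \<in> B t'"
      using td vw unfolding tree_decomposition_def by blast
    then show ?thesis using only by blast
  qed
  then have "insert v {w. E v w} \<subseteq> B t" using t by blast
  moreover have "finite (B t)"
    using sg td t unfolding simple_graph_def tree_decomposition_def by (meson finite_subset)
  ultimately have "card (insert v {w. E v w}) \<le> card (B t)" by (rule card_mono[rotated])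
  moreover have "v \<notin> {w. E v w}" "finite {w. E v w}"
    using sg unfolding simple_graph_def by (auto intro: finite_subset)
  ultimately show ?thesis by simp
qed

text \<open>A leaf bag contained in the bag of its neighbour can be deleted; otherwise it contains a
  vertex that lies in no other bag, and the closed neighbourhood of that vertex fits into it.\<close>

lemma tree_decomposition_large_bag:
  assumes sg: "simple_graph V E" and ne: "V \<noteq> {}" and deg: "\<forall>v\<in>V. d \<le> card {w. E v w}"
  shows "tree_decomposition V E N TE B \<Longrightarrow> \<exists>t\<in>N. d + 1 \<le> card (B t)"
proof (induction "card N" arbitrary: N TE B rule: less_induct)
  case less
  have tree: "is_tree N TE" and bags: "\<forall>t\<in>N. B t \<subseteq> V" and cover: "\<forall>v\<in>V. \<exists>t\<in>N. v \<in> B t"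
    using less.prems unfolding tree_decomposition_def by blast+
  have large_if_private: "\<exists>t\<in>N. d + 1 \<le> card (B t)"
    if "t \<in> N" "v \<in> B t" "\<forall>t'\<in>N. v \<in> B t' \<longrightarrow> t' = t" for t v
  proof -
    have "v \<in> V" using bags that by blast
    then have "d + 1 \<le> card {w. E v w} + 1" using deg by simp
    also have "\<dots> \<le> card (B t)" by (rule card_bag_ge_degree[OF sg less.prems that])
    finally show ?thesis using that(1) by blast
  qed
  show ?case
  proof (cases "card N \<ge> 2")
    case False
    have "finite N" "N \<noteq> {}"
      using tree unfolding is_tree_def simple_graph_def connected_graph_def by auto
    then have "card N = 1" using False card_gt_0_iff[of N] by linarith
    then obtain t where N: "N = {t}" by (rule card_1_singletonE)
    obtain v where "v \<in> V" using ne by blast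
    then have "v \<in> B t" using cover N by blast
    then show ?thesis using large_if_private N by blast
  next
    case True
    then obtain t s where t: "t \<in> N" "s \<in> N" "TE t s" and leaf: "\<forall>x. TE t x \<longrightarrow> x = s"
      using tree_has_leaf[OF tree] by blast
    show ?thesis
    proof (cases "B t \<subseteq> B s")
      case True
      have "finite N" using tree unfolding is_tree_def simple_graph_def by blast
      then have "card (N - {t}) < card N" using t(1) by (rule card_Diff1_less)
      moreover have "tree_decomposition V E (N - {t}) (without_node TE t) B"
        using tree_decomposition_without_leaf[OF less.prems t _ True] leaf by blast
      ultimately obtain t' where "t' \<in> N - {t}" "d + 1 \<le> card (B t')"
        using less.hyps by blast
      then show ?thesis by blast
    next
      case False
      then obtain v where v: "v \<in> B t" "v \<notin> B s" by blast
      have "\<forall>t'\<in>N. v \<in> B t' \<longrightarrow> t' = t"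
        using tree_decomposition_private_vertex[OF less.prems t(1) _ v] leaf by blast
      then show ?thesis using large_if_private t(1) v(1) by blast
    qed
  qed
qed

theorem treewidth_ge_min_degree:
  assumes sg: "simple_graph V E" and ne: "V \<noteq> {}" and deg: "\<forall>v\<in>V. d \<le> card {w. E v w}"
  shows "d \<le> treewidth V E"
proof -
  let ?P = "\<lambda>w. \<exists>N TE B. tree_decomposition V E N TE B \<and> decomp_width N B = w"
  have "tree_decomposition V E {0} (\<lambda>_ _. False) (\<lambda>_. V)"
    using sg unfolding tree_decomposition_def is_tree_def simple_graph_def connected_graph_def
      connected_on_def has_cycle_def by auto
  then have ex: "?P (decomp_width {0} (\<lambda>_. V))" by blast
  have "d \<le> w" if "?P w" for w
  proof -
    from that obtain N TE B where td: "tree_decomposition V E N TE B" and w: "decomp_width N B = w"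
      by blast
    obtain t where t: "t \<in> N" "d + 1 \<le> card (B t)"
      using tree_decomposition_large_bag[OF sg ne deg td] by blast
    have "finite N" using td unfolding tree_decomposition_def is_tree_def simple_graph_def by auto
    then have "card (B t) \<le> Max ((\<lambda>t. card (B t)) ` N)" using t by (intro Max_ge) auto
    then show ?thesis using w t unfolding decomp_width_def by linarith
  qed
  then show ?thesis unfolding treewidth_def using LeastI[of ?P, OF ex] by blast
qed

section \<open>The extension property implies 2-connectivity\<close>

definition reachable_within :: "(nat \<Rightarrow> nat \<Rightarrow> bool) \<Rightarrow> nat set \<Rightarrow> nat \<Rightarrow> nat \<Rightarrow> bool" where
  "reachable_within E S = (\<lambda>x y. x \<in> S \<and> y \<in> S \<and> E x y)\<^sup>*\<^sup>*"

lemma reachable_within_refl: "reachable_within E S x x"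
  unfolding reachable_within_def by simp

lemma reachable_within_edge: "x \<in> S \<Longrightarrow> y \<in> S \<Longrightarrow> E x y \<Longrightarrow> reachable_within E S x y"
  unfolding reachable_within_def by auto

lemma reachable_within_trans:
  "reachable_within E S x y \<Longrightarrow> reachable_within E S y z \<Longrightarrow> reachable_within E S x z"
  unfolding reachable_within_def by auto

lemma connected_on_iff_reachable_within:
  "connected_on E S \<longleftrightarrow> (\<forall>u\<in>S. \<forall>w\<in>S. reachable_within E S u w)"
  unfolding connected_on_def reachable_within_def ..

context
  fixes V :: "nat set" and side :: "nat \<Rightarrow> bool" and E :: "nat \<Rightarrow> nat \<Rightarrow> bool"
  assumes sg: "simple_graph V E" and bip: "bipartite side E" and ext: "extension_property V side E"
begin

private abbreviation (input) "ty \<equiv> type_of_pair side E"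

lemma extension_realize:
  assumes "u1 \<in> V" "u2 \<in> V" "consistent_types t1 t2 (ty u1 u2)"
  obtains z where "z \<in> V" "ty u1 z = t1" "ty u2 z = t2"
  using extension_propertyD[OF ext assms] by blast

lemma extension_common_neighbour:
  assumes "u \<in> V" "w \<in> V" "ty u w = Same_Side"
  obtains z where "z \<in> V" "E u z" "E w z"
  using extension_realize[OF assms(1,2), of Adjacent Adjacent] assms(3)
  by (auto simp: consistent_types_def type_of_pair_Adjacent_iff[OF bip])

lemma extension_same_side_reachable_avoiding:
  assumes uw: "u \<in> V" "w \<in> V" "ty u w = Same_Side" "u \<noteq> x" "w \<noteq> x"
  shows "reachable_within E (V - {x}) u w"
proof -
  have inV: "a \<in> V" "b \<in> V" if "E a b" for a b using sg that unfolding simple_graph_def by auto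
  have path2: "reachable_within E (V - {x}) a b"
    if "E a z" "E b z" "a \<noteq> x" "b \<noteq> x" "z \<noteq> x" for a b z
  proof -
    have "E z b" using bip that(2) unfolding bipartite_def by blast
    then show ?thesis
      using that inV reachable_within_edge[of a "V - {x}" z E] reachable_within_edge[of z "V - {x}" b E]
      by (blast intro: reachable_within_trans)
  qed
  obtain z where z: "z \<in> V" "E u z" "E w z" using extension_common_neighbour[OF uw(1-3)] .
  show ?thesis
  proof (cases "z = x")
    case False
    show ?thesis by (rule path2[OF z(2,3) uw(4,5) False])
  next
    case True
    have "ty u z = Adjacent" using z(2) by (simp add: type_of_pair_Adjacent_iff[OF bip])
    \<comment> \<open>detour through a vertex y on the side of u that is not adjacent to x\<close>
    then obtain y where y: "y \<in> V" "ty u y = Same_Side" "ty x y = Opposite_Side"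
      using extension_realize[OF uw(1) z(1), of Same_Side Opposite_Side] True
      by (auto simp: consistent_types_def)
    then have "y \<noteq> x" "\<not> E y x" "ty y w = Same_Side"
      using uw(3) bip z(3) True type_of_pair_commute[OF bip, of u y]
      by (auto simp: type_of_pair_Same_Side_iff[OF bip] type_of_pair_Opposite_Side_iff bipartite_def)
    obtain z1 where z1: "z1 \<in> V" "E u z1" "E y z1"
      using extension_common_neighbour[OF uw(1) y(1,2)] .
    obtain z2 where z2: "z2 \<in> V" "E y z2" "E w z2"
      using extension_common_neighbour[OF y(1) uw(2) \<open>ty y w = Same_Side\<close>] .
    have "z1 \<noteq> x" "z2 \<noteq> x" using z1(3) z2(2) \<open>\<not> E y x\<close> by auto
    then have "reachable_within E (V - {x}) u y" "reachable_within E (V - {x}) y w"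
      using path2[OF z1(2,3) uw(4) \<open>y \<noteq> x\<close>] path2[OF z2(2,3) \<open>y \<noteq> x\<close> uw(5)] by auto
    then show ?thesis by (rule reachable_within_trans)
  qed
qed

lemma extension_reachable_avoiding:
  assumes uw: "u \<in> V" "w \<in> V" "u \<noteq> x" "w \<noteq> x"
  shows "reachable_within E (V - {x}) u w"
proof (cases "ty u w")
  case Equal
  then show ?thesis by (simp add: reachable_within_refl)
next
  case Adjacent
  then show ?thesis using uw by (auto simp: type_of_pair_Adjacent_iff[OF bip] intro: reachable_within_edge)
next
  case Same_Side
  then show ?thesis using extension_same_side_reachable_avoiding uw by blast
next
  case Opposite_Side
  obtain z where z: "z \<in> V" "E u z" "ty w z = Same_Side"
    using extension_realize[OF uw(1,2), of Adjacent Same_Side] Opposite_Side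
    by (auto simp: consistent_types_def type_of_pair_Adjacent_iff[OF bip])
  obtain y where y: "y \<in> V" "ty u y = Same_Side" "E w y"
    using extension_realize[OF uw(1,2), of Same_Side Adjacent] Opposite_Side
    by (auto simp: consistent_types_def type_of_pair_Adjacent_iff[OF bip])
  have "z \<noteq> y" using z y bip by (auto simp: type_of_pair_Same_Side_iff[OF bip] bipartite_def)
  show ?thesis
  proof (cases "z = x")
    case False
    have "ty z w = Same_Side" using z(3) type_of_pair_commute[OF bip, of z w] by simp
    then have "reachable_within E (V - {x}) z w"
      using extension_same_side_reachable_avoiding[OF z(1) uw(2)] False uw by blast
    moreover have "reachable_within E (V - {x}) u z" using z(1,2) uw False by (auto intro: reachable_within_edge)
    ultimately show ?thesis by (blast intro: reachable_within_trans)
  next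
    case True
    have "E y w" using bip y(3) unfolding bipartite_def by blast
    then have "reachable_within E (V - {x}) y w"
      using y(1) uw \<open>z \<noteq> y\<close> True by (auto intro: reachable_within_edge)
    moreover have "reachable_within E (V - {x}) u y"
      using extension_same_side_reachable_avoiding[OF uw(1) y(1,2) uw(3)] \<open>z \<noteq> y\<close> True by blast
    ultimately show ?thesis by (blast intro: reachable_within_trans)
  qed
qed

lemma extension_card_gt_2:
  assumes "V \<noteq> {}"
  shows "2 < card V"
proof -
  obtain v where v: "v \<in> V" using assms by blast
  obtain z1 where z1: "z1 \<in> V" "ty v z1 = Same_Side"
    using extension_realize[OF v v, of Same_Side Same_Side] by (auto simp: consistent_types_def)
  obtain z2 where z2: "z2 \<in> V" "ty v z2 = Opposite_Side"
    using extension_realize[OF v v, of Opposite_Side Opposite_Side] by (auto simp: consistent_types_def)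
  have "v \<noteq> z1" "v \<noteq> z2" "z1 \<noteq> z2"
    using z1(2) z2(2) by (auto simp: type_of_pair_def split: if_splits)
  then have "card {v, z1, z2} = 3" by simp
  moreover have "card {v, z1, z2} \<le> card V"
    using v z1 z2 sg unfolding simple_graph_def by (intro card_mono) auto
  ultimately show ?thesis by linarith
qed

theorem extension_property_two_connected:
  assumes "V \<noteq> {}"
  shows "two_connected V E"
proof -
  have conn: "connected_on E (V - {x})" for x
    using extension_reachable_avoiding unfolding connected_on_iff_reachable_within by blast
  have finite: "finite V" using sg unfolding simple_graph_def by blast
  then obtain x where "x \<notin> V" using ex_new_if_finite[OF infinite_UNIV_nat] by blast
  then have "connected_on E V" using conn[of x] by simp
  moreover have "V - {v} \<noteq> {}" for v
  proof
    assume "V - {v} = {}"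
    then have "card V \<le> card {v}" by (intro card_mono) auto
    then show False using extension_card_gt_2[OF assms] by simp
  qed
  ultimately show ?thesis
    using assms conn extension_card_gt_2[OF assms] unfolding two_connected_def connected_graph_def by blast
qed

end

section \<open>Four-cycles and rich graphs\<close>

definition has_C4 :: "'a set \<Rightarrow> ('a \<Rightarrow> 'a \<Rightarrow> bool) \<Rightarrow> bool" where
  "has_C4 X R \<longleftrightarrow>
     (\<exists>a\<in>X. \<exists>b\<in>X. \<exists>c\<in>X. \<exists>e\<in>X. a \<noteq> c \<and> b \<noteq> e \<and> R a b \<and> R b c \<and> R c e \<and> R e a)"

lemma contains_C4_iff_has_C4:
  assumes sg: "simple_graph V E"
  shows "contains_subgraph V E C4_V C4_E \<longleftrightarrow> has_C4 V E"
proof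
  assume "has_C4 V E"
  then obtain v0 v1 v2 v3 where v: "v0 \<in> V" "v1 \<in> V" "v2 \<in> V" "v3 \<in> V" "v0 \<noteq> v2" "v1 \<noteq> v3"
    "E v0 v1" "E v1 v2" "E v2 v3" "E v3 v0" unfolding has_C4_def by blast
  have "v0 \<noteq> v1" "v1 \<noteq> v2" "v2 \<noteq> v3" "v3 \<noteq> v0" "E v1 v0" "E v2 v1" "E v3 v2" "E v0 v3"
    using v sg unfolding simple_graph_def by auto
  define f where "f i = (if i = 0 then v0 else if i = 1 then v1 else if i = 2 then v2 else v3)"
    for i :: nat
  have "inj_on f C4_V" "f ` C4_V \<subseteq> V" "\<forall>u\<in>C4_V. \<forall>w\<in>C4_V. C4_E u w \<longrightarrow> E (f u) (f w)"
    using v \<open>v0 \<noteq> v1\<close> \<open>v1 \<noteq> v2\<close> \<open>v2 \<noteq> v3\<close> \<open>v3 \<noteq> v0\<close> \<open>E v1 v0\<close> \<open>E v2 v1\<close> \<open>E v3 v2\<close> \<open>E v0 v3\<close>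
    unfolding inj_on_def C4_V_def C4_E_def f_def by auto
  then show "contains_subgraph V E C4_V C4_E" unfolding contains_subgraph_def by blast
next
  assume "contains_subgraph V E C4_V C4_E"
  then obtain f where f: "inj_on f C4_V" "f ` C4_V \<subseteq> V"
    "\<forall>u\<in>C4_V. \<forall>w\<in>C4_V. C4_E u w \<longrightarrow> E (f u) (f w)"
    unfolding contains_subgraph_def by blast
  have C4: "(0::nat) \<in> C4_V" "(1::nat) \<in> C4_V" "(2::nat) \<in> C4_V" "(3::nat) \<in> C4_V"
    unfolding C4_V_def by auto
  then have "E (f 0) (f 1)" "E (f 1) (f 2)" "E (f 2) (f 3)" "E (f 3) (f 0)"
    using f(3) unfolding C4_E_def by (auto simp: C4_V_def)
  moreover have "f 0 \<noteq> f 2" "f 1 \<noteq> f 3" using inj_onD[OF f(1)] C4 by fastforce+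
  ultimately show "has_C4 V E" unfolding has_C4_def using f(2) C4 by blast
qed

definition C4_sentence :: fo where
  "C4_sentence = Ex 0 (Ex 1 (Ex 2 (Ex 3 (Conj (Conj (Neg (Eq 0 2)) (Neg (Eq 1 3)))
     (Conj (Adj 0 1) (Conj (Adj 1 2) (Conj (Adj 2 3) (Adj 3 0))))))))"

lemma sentence_C4_sentence: "sentence C4_sentence"
  unfolding sentence_def C4_sentence_def by auto

lemma var_width_C4_sentence: "var_width C4_sentence = 4"
proof -
  have "vars C4_sentence = {0, 1, 2, 3}" unfolding C4_sentence_def by auto
  then show ?thesis unfolding var_width_def by simp
qed

lemma models_C4_sentence_iff: "models V E C4_sentence \<longleftrightarrow> has_C4 V E"
  unfolding models_def C4_sentence_def has_C4_def by auto

definition rich_graph :: "'a set \<Rightarrow> ('a \<Rightarrow> bool) \<Rightarrow> ('a \<Rightarrow> 'a \<Rightarrow> bool) \<Rightarrow> nat \<Rightarrow> bool" where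
  "rich_graph X side R d \<longleftrightarrow> finite X \<and> X \<noteq> {} \<and> (\<forall>x y. R x y \<longrightarrow> x \<in> X \<and> y \<in> X) \<and>
     bipartite side R \<and> extension_property X side R \<and> (\<forall>x\<in>X. d \<le> card {y. R x y})"

lemma rich_graphD:
  assumes "rich_graph X side R d"
  shows "finite X" "X \<noteq> {}" "\<And>x y. R x y \<Longrightarrow> x \<in> X \<and> y \<in> X" "bipartite side R"
    "extension_property X side R" "\<forall>x\<in>X. d \<le> card {y. R x y}"
  using assms unfolding rich_graph_def by blast+

definition graph_image :: "('a \<Rightarrow> nat) \<Rightarrow> 'a set \<Rightarrow> ('a \<Rightarrow> 'a \<Rightarrow> bool) \<Rightarrow> nat \<Rightarrow> nat \<Rightarrow> bool" where
  "graph_image f X R u v \<longleftrightarrow> (\<exists>x\<in>X. \<exists>y\<in>X. u = f x \<and> v = f y \<and> R x y)"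

context
  fixes X :: "'a set" and side :: "'a \<Rightarrow> bool" and R :: "'a \<Rightarrow> 'a \<Rightarrow> bool" and d :: nat
    and f :: "'a \<Rightarrow> nat"
  assumes rich: "rich_graph X side R d" and inj: "inj_on f X"
begin

private abbreviation (input) "E \<equiv> graph_image f X R"
private abbreviation (input) "side' \<equiv> side \<circ> inv_into X f"

lemma graph_image_iff: "x \<in> X \<Longrightarrow> y \<in> X \<Longrightarrow> E (f x) (f y) \<longleftrightarrow> R x y"
  using inj unfolding graph_image_def inj_on_def by blast

lemma graph_imageE:
  assumes "E u v"
  obtains x y where "x \<in> X" "y \<in> X" "u = f x" "v = f y" "R x y"
  using assms unfolding graph_image_def by blast

lemma type_of_pair_graph_image:
  "x \<in> X \<Longrightarrow> y \<in> X \<Longrightarrow> type_of_pair side' E (f x) (f y) = type_of_pair side R x y"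
  using graph_image_iff by (simp add: type_of_pair_def inv_into_f_f[OF inj] inj_on_eq_iff[OF inj])

lemma simple_graph_graph_image: "simple_graph (f ` X) E"
  unfolding simple_graph_def
  using rich_graphD(1,3,4)[OF rich] bipartite_irrefl[OF rich_graphD(4)[OF rich]] graph_image_iff
  by (auto elim!: graph_imageE simp: inj_on_eq_iff[OF inj] bipartite_def)

lemma rich_graph_graph_image: "rich_graph (f ` X) side' E d"
proof -
  note rich = rich_graphD[OF rich]
  have "bipartite side' E"
    using rich(4) unfolding bipartite_def
    by (auto elim!: graph_imageE simp: graph_image_iff inv_into_f_f[OF inj])
  moreover have "extension_property (f ` X) side' E"
    unfolding extension_property_def
  proof (intro ballI allI impI)
    fix u1 u2 t1 t2
    assume "u1 \<in> f ` X" "u2 \<in> f ` X" and cons: "consistent_types t1 t2 (type_of_pair side' E u1 u2)"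
    then obtain x1 x2 where x: "x1 \<in> X" "x2 \<in> X" "u1 = f x1" "u2 = f x2" by blast
    then obtain z where "z \<in> X" "type_of_pair side R x1 z = t1" "type_of_pair side R x2 z = t2"
      using extension_propertyD[OF rich(5) x(1,2)] cons type_of_pair_graph_image by metis
    then show "\<exists>z\<in>f ` X. type_of_pair side' E u1 z = t1 \<and> type_of_pair side' E u2 z = t2"
      using x type_of_pair_graph_image by blast
  qed
  moreover have "d \<le> card {w. E v w}" if "v \<in> f ` X" for v
  proof -
    obtain x where x: "x \<in> X" "v = f x" using \<open>v \<in> f ` X\<close> by blast
    have "{w. E v w} = f ` {y. R x y}"
      using x rich(3) by (auto elim!: graph_imageE simp: graph_image_iff inj_on_eq_iff[OF inj])
    moreover have "inj_on f {y. R x y}" using inj rich(3) by (blast intro: inj_on_subset)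
    ultimately show ?thesis using rich(6) x by (simp add: card_image)
  qed
  moreover have "\<forall>u v. E u v \<longrightarrow> u \<in> f ` X \<and> v \<in> f ` X"
    unfolding graph_image_def by blast
  ultimately show ?thesis using rich(1,2) unfolding rich_graph_def by blast
qed

lemma has_C4_graph_image_iff: "has_C4 (f ` X) E \<longleftrightarrow> has_C4 X R"
proof
  assume "has_C4 (f ` X) E"
  then obtain a b c e where "a \<in> X" "b \<in> X" "c \<in> X" "e \<in> X" "f a \<noteq> f c" "f b \<noteq> f e"
    "E (f a) (f b)" "E (f b) (f c)" "E (f c) (f e)" "E (f e) (f a)"
    unfolding has_C4_def by blast
  then show "has_C4 X R" unfolding has_C4_def using graph_image_iff by metis
next
  assume "has_C4 X R"
  then obtain a b c e where "a \<in> X" "b \<in> X" "c \<in> X" "e \<in> X" "a \<noteq> c" "b \<noteq> e"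
    "R a b" "R b c" "R c e" "R e a"
    unfolding has_C4_def by blast
  moreover have "f a \<noteq> f c" "f b \<noteq> f e" using calculation inj_on_eq_iff[OF inj] by blast+
  ultimately show "has_C4 (f ` X) E" unfolding has_C4_def using graph_image_iff by blast
qed

end

lemma rich_graph_on_nat:
  assumes "rich_graph X side R d"
  obtains V side' E where "simple_graph V E" "rich_graph V side' E d" "has_C4 V E \<longleftrightarrow> has_C4 X R"
proof -
  have "finite X" using assms unfolding rich_graph_def by blast
  then obtain f :: "'a \<Rightarrow> nat" and n where "f ` X = {i. i < n}" and f: "inj_on f X"
    by (blast dest: finite_imp_inj_to_nat_seg)
  show thesis
    by (rule that[OF simple_graph_graph_image[OF assms f] rich_graph_graph_image[OF assms f]
          has_C4_graph_image_iff[OF assms f]])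
qed

section \<open>A rich graph with a four-cycle\<close>

definition double_grid :: "nat \<Rightarrow> (bool \<times> nat \<times> nat) set" where
  "double_grid n = UNIV \<times> {..<n} \<times> {..<n}"

definition double_grid_adj :: "nat \<Rightarrow> bool \<times> nat \<times> nat \<Rightarrow> bool \<times> nat \<times> nat \<Rightarrow> bool" where
  "double_grid_adj n x y \<longleftrightarrow> x \<in> double_grid n \<and> y \<in> double_grid n \<and>
     fst x \<noteq> fst y \<and> fst (snd x) \<noteq> fst (snd y) \<and> snd (snd x) \<noteq> snd (snd y)"

lemma double_grid_iff [simp]: "(s, a, b) \<in> double_grid n \<longleftrightarrow> a < n \<and> b < n"
  by (simp add: double_grid_def)

lemma double_grid_adj_iff [simp]:
  "double_grid_adj n (s, a, b) (s', a', b') \<longleftrightarrow> a < n \<and> b < n \<and> a' < n \<and> b' < n \<and> s \<noteq> s' \<and> a \<noteq> a' \<and> b \<noteq> b'"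
  by (auto simp: double_grid_adj_def)

lemma bipartite_double_grid: "bipartite fst (double_grid_adj n)"
  unfolding bipartite_def double_grid_adj_def by auto

lemma type_of_pair_double_grid:
  "type_of_pair fst (double_grid_adj n) (s, a, b) (s', a', b') =
    (if (s, a, b) = (s', a', b') then Equal
     else if a < n \<and> b < n \<and> a' < n \<and> b' < n \<and> s \<noteq> s' \<and> a \<noteq> a' \<and> b \<noteq> b' then Adjacent
     else if s = s' then Same_Side else Opposite_Side)"
  by (simp add: type_of_pair_def)

lemma exists_less_avoiding_two:
  assumes "3 \<le> n"
  shows "\<exists>c<n. c \<noteq> p \<and> c \<noteq> (q::nat)"
proof -
  have "\<exists>c::nat. c < 3 \<and> c \<noteq> p \<and> c \<noteq> q" by presburger
  then show ?thesis using assms by (meson less_le_trans)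
qed

lemma double_grid_realizes_single:
  assumes n: "3 \<le> n" and x: "x \<in> double_grid n"
  shows "realizes (double_grid n) fst (double_grid_adj n) x x Adjacent Adjacent \<and>
    realizes (double_grid n) fst (double_grid_adj n) x x Same_Side Same_Side \<and>
    realizes (double_grid n) fst (double_grid_adj n) x x Opposite_Side Opposite_Side"
proof -
  obtain s a b where xe: "x = (s, a, b)" by (cases x)
  obtain c where c: "c < n" "c \<noteq> a" using exists_less_avoiding_two[OF n] by blast
  obtain d where d: "d < n" "d \<noteq> b" using exists_less_avoiding_two[OF n] by blast
  have "realizes (double_grid n) fst (double_grid_adj n) x x Adjacent Adjacent"
    using x xe c d by (intro realizesI[of "(\<not> s, c, d)"]) (simp_all add: type_of_pair_double_grid)
  moreover have "realizes (double_grid n) fst (double_grid_adj n) x x Same_Side Same_Side"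
    using x xe c by (intro realizesI[of "(s, c, b)"]) (simp_all add: type_of_pair_double_grid)
  moreover have "realizes (double_grid n) fst (double_grid_adj n) x x Opposite_Side Opposite_Side"
    using x xe by (intro realizesI[of "(\<not> s, a, b)"]) (simp_all add: type_of_pair_double_grid)
  ultimately show ?thesis by blast
qed

lemma double_grid_realizes_same_side:
  assumes n: "3 \<le> n" and x: "x \<in> double_grid n" and y: "y \<in> double_grid n"
    and "x \<noteq> y" "fst x = fst y"
  shows "realizes (double_grid n) fst (double_grid_adj n) x y Adjacent Adjacent \<and>
    realizes (double_grid n) fst (double_grid_adj n) x y Same_Side Same_Side \<and>
    realizes (double_grid n) fst (double_grid_adj n) x y Opposite_Side Opposite_Side \<and>
    realizes (double_grid n) fst (double_grid_adj n) x y Adjacent Opposite_Side"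
proof -
  obtain s a b a' b' where xe: "x = (s, a, b)" and ye: "y = (s, a', b')"
    using \<open>fst x = fst y\<close> by (cases x; cases y) auto
  obtain c where c: "c < n" "c \<noteq> a" "c \<noteq> a'" using exists_less_avoiding_two[OF n] by blast
  obtain d where d: "d < n" "d \<noteq> b" "d \<noteq> b'" using exists_less_avoiding_two[OF n] by blast
  have "realizes (double_grid n) fst (double_grid_adj n) x y Adjacent Opposite_Side"
  proof (cases "a = a'")
    case True
    then have "b \<noteq> b'" using \<open>x \<noteq> y\<close> xe ye by auto
    then show ?thesis using x y xe ye c True
      by (intro realizesI[of "(\<not> s, c, b')"]) (simp_all add: type_of_pair_double_grid)
  next
    case False
    then show ?thesis using x y xe ye d
      by (intro realizesI[of "(\<not> s, a', d)"]) (simp_all add: type_of_pair_double_grid)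
  qed
  moreover have "realizes (double_grid n) fst (double_grid_adj n) x y Adjacent Adjacent"
    using x y xe ye c d by (intro realizesI[of "(\<not> s, c, d)"]) (simp_all add: type_of_pair_double_grid)
  moreover have "realizes (double_grid n) fst (double_grid_adj n) x y Same_Side Same_Side"
    using x y xe ye c d by (intro realizesI[of "(s, c, d)"]) (simp_all add: type_of_pair_double_grid)
  moreover have "realizes (double_grid n) fst (double_grid_adj n) x y Opposite_Side Opposite_Side"
    using x y xe ye by (intro realizesI[of "(\<not> s, a, b')"]) (simp_all add: type_of_pair_double_grid)
  ultimately show ?thesis by blast
qed

lemma double_grid_realizes_opposite_side:
  assumes n: "3 \<le> n" and x: "x \<in> double_grid n" and y: "y \<in> double_grid n" and "fst x \<noteq> fst y"
  shows "realizes (double_grid n) fst (double_grid_adj n) x y Same_Side Adjacent \<and>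
    realizes (double_grid n) fst (double_grid_adj n) x y Same_Side Opposite_Side"
proof -
  obtain s a b s' a' b' where xe: "x = (s, a, b)" and ye: "y = (s', a', b')" by (cases x; cases y)
  obtain c where c: "c < n" "c \<noteq> a" "c \<noteq> a'" using exists_less_avoiding_two[OF n] by blast
  obtain d where d: "d < n" "d \<noteq> b" "d \<noteq> b'" using exists_less_avoiding_two[OF n] by blast
  have "realizes (double_grid n) fst (double_grid_adj n) x y Same_Side Adjacent"
    using x y xe ye c d \<open>fst x \<noteq> fst y\<close>
    by (intro realizesI[of "(s, c, d)"]) (simp_all add: type_of_pair_double_grid)
  moreover have "realizes (double_grid n) fst (double_grid_adj n) x y Same_Side Opposite_Side"
    using x y xe ye c d \<open>fst x \<noteq> fst y\<close>
    by (intro realizesI[of "(s, a', d)"]) (simp_all add: type_of_pair_double_grid)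
  ultimately show ?thesis by blast
qed

lemma extension_property_double_grid:
  assumes "3 \<le> n"
  shows "extension_property (double_grid n) fst (double_grid_adj n)"
  using double_grid_realizes_single double_grid_realizes_same_side double_grid_realizes_opposite_side
    assms by (intro extension_propertyI[OF bipartite_double_grid]) blast+

lemma min_degree_double_grid:
  assumes "x \<in> double_grid n"
  shows "n - 2 \<le> card {y. double_grid_adj n x y}"
proof -
  obtain s a b where xe: "x = (s, a, b)" by (cases x)
  let ?f = "\<lambda>c. (\<not> s, c, c)"
  have "?f ` ({..<n} - {a, b}) \<subseteq> {y. double_grid_adj n x y}"
    using assms xe by auto
  moreover have "finite {y. double_grid_adj n x y}"
    by (rule finite_subset[of _ "double_grid n"]) (auto simp: double_grid_adj_def double_grid_def)
  ultimately have "card (?f ` ({..<n} - {a, b})) \<le> card {y. double_grid_adj n x y}"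
    by (rule card_mono[rotated])
  moreover have "card (?f ` ({..<n} - {a, b})) = card ({..<n} - {a, b})"
    by (rule card_image) (auto simp: inj_on_def)
  moreover have "n - 2 \<le> card ({..<n} - {a, b})"
    using diff_card_le_card_Diff[of "{a, b}" "{..<n}"] card_insert_le_m1[of 2 "{b}" a] by simp
  ultimately show ?thesis by linarith
qed

theorem rich_graph_double_grid:
  assumes "d + 3 \<le> n"
  shows "rich_graph (double_grid n) fst (double_grid_adj n) d"
  unfolding rich_graph_def
proof (intro conjI)
  show "finite (double_grid n)" unfolding double_grid_def by simp
  have "(True, 0, 0) \<in> double_grid n" using assms by simp
  then show "double_grid n \<noteq> {}" by blast
  show "\<forall>x y. double_grid_adj n x y \<longrightarrow> x \<in> double_grid n \<and> y \<in> double_grid n"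
    unfolding double_grid_adj_def by blast
  show "extension_property (double_grid n) fst (double_grid_adj n)"
    using assms by (intro extension_property_double_grid) simp
  show "\<forall>x\<in>double_grid n. d \<le> card {y. double_grid_adj n x y}"
  proof
    fix x assume "x \<in> double_grid n"
    then have "n - 2 \<le> card {y. double_grid_adj n x y}" by (rule min_degree_double_grid)
    then show "d \<le> card {y. double_grid_adj n x y}" using assms by linarith
  qed
qed (rule bipartite_double_grid)

lemma has_C4_double_grid:
  assumes "4 \<le> n"
  shows "has_C4 (double_grid n) (double_grid_adj n)"
  unfolding has_C4_def using assms
  by (intro bexI[of _ "(True, 0, 0)"] bexI[of _ "(False, 1, 1)"] bexI[of _ "(True, 2, 2)"]
      bexI[of _ "(False, 3, 3)"]) auto

section \<open>Incidence graphs of projective planes\<close>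

lemma three_distinct_avoid: "a \<noteq> b \<Longrightarrow> a \<noteq> c \<Longrightarrow> b \<noteq> c \<Longrightarrow> \<exists>z\<in>{a, b, c}. z \<noteq> x \<and> z \<noteq> y"
  by auto

locale projective_plane_graph =
  fixes X :: "'a set" and side :: "'a \<Rightarrow> bool" and R :: "'a \<Rightarrow> 'a \<Rightarrow> bool"
  assumes bipartite: "bipartite side R"
    and edge_source_in: "R x y \<Longrightarrow> x \<in> X"
    and common_neighbour: "x \<in> X \<Longrightarrow> y \<in> X \<Longrightarrow> x \<noteq> y \<Longrightarrow> side x = side y \<Longrightarrow> \<exists>z. R x z \<and> R y z"
    and no_C4: "R a b \<Longrightarrow> R b c \<Longrightarrow> R c e \<Longrightarrow> R e a \<Longrightarrow> a = c \<or> b = e"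
    and three_neighbours: "x \<in> X \<Longrightarrow> \<exists>a b c. a \<noteq> b \<and> a \<noteq> c \<and> b \<noteq> c \<and> R x a \<and> R x b \<and> R x c"
    and nonempty: "X \<noteq> {}"
begin

abbreviation (input) ty where "ty \<equiv> type_of_pair side R"

lemma sym: "R x y \<Longrightarrow> R y x"
  using bipartite unfolding bipartite_def by blast

lemma side_neq: "R x y \<Longrightarrow> side x \<noteq> side y"
  using bipartite unfolding bipartite_def by blast

lemma edge_target_in: "R x y \<Longrightarrow> y \<in> X"
  using edge_source_in[OF sym] .

lemma unique_common_neighbour:
  assumes "x \<noteq> y" "R x z" "R y z" "R x w" "R y w"
  shows "z = w"
  using no_C4[OF assms(2) sym[OF assms(3)] assms(5) sym[OF assms(4)]] assms(1) by simp

lemma not_has_C4: "\<not> has_C4 X R"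
  unfolding has_C4_def using no_C4 by blast

lemma neighbour_avoiding: "x \<in> X \<Longrightarrow> \<exists>a b. a \<noteq> b \<and> R x a \<and> R x b \<and> a \<noteq> u \<and> b \<noteq> u"
proof -
  assume "x \<in> X"
  then obtain a b c where "a \<noteq> b" "a \<noteq> c" "b \<noteq> c" "R x a" "R x b" "R x c"
    using three_neighbours by blast
  moreover obtain z where "z \<in> {a, b, c}" "z \<noteq> u" using three_distinct_avoid calculation(1-3) by blast
  ultimately show ?thesis by blast
qed

lemma far_vertex: "x \<in> X \<Longrightarrow> \<exists>m\<in>X. side m \<noteq> side x \<and> \<not> R x m"
proof -
  assume x: "x \<in> X"
  obtain l where l: "R x l" using neighbour_avoiding[OF x] by blast
  obtain y where y: "R l y" "y \<noteq> x" using neighbour_avoiding[OF edge_target_in[OF l]] by blast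
  obtain m where m: "R y m" "m \<noteq> l" using neighbour_avoiding[OF edge_target_in[OF y(1)]] by blast
  have "\<not> R x m"
  proof
    assume "R x m"
    then show False using unique_common_neighbour[of x y l m] y l m sym[OF y(1)] by blast
  qed
  moreover have "side m \<noteq> side x" using side_neq[OF l] side_neq[OF y(1)] side_neq[OF m(1)] by auto
  ultimately show ?thesis using edge_target_in[OF m(1)] by blast
qed

lemma same_side_other: "x \<in> X \<Longrightarrow> \<exists>z\<in>X. z \<noteq> x \<and> z \<noteq> y \<and> side z = side x"
proof -
  assume x: "x \<in> X"
  obtain l where l: "R x l" using neighbour_avoiding[OF x] by blast
  obtain a b c where abc: "a \<noteq> b" "a \<noteq> c" "b \<noteq> c" "R l a" "R l b" "R l c"
    using three_neighbours[OF edge_target_in[OF l]] by blast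
  have "side a = side x" "side b = side x" "side c = side x"
    using side_neq[OF l] side_neq[OF abc(4)] side_neq[OF abc(5)] side_neq[OF abc(6)] by auto
  moreover have "a \<in> X" "b \<in> X" "c \<in> X" using abc edge_target_in by blast+
  moreover obtain z where "z \<in> {a, b, c}" "z \<noteq> x" "z \<noteq> y" using three_distinct_avoid[OF abc(1-3)] by blast
  ultimately show ?thesis by blast
qed

lemma neighbour_not_shared: "x \<in> X \<Longrightarrow> x \<noteq> y \<Longrightarrow> \<exists>z\<in>X. R x z \<and> \<not> R y z"
proof -
  assume x: "x \<in> X" and xy: "x \<noteq> y"
  obtain a b where ab: "a \<noteq> b" "R x a" "R x b" using neighbour_avoiding[OF x] by blast
  have "\<not> R y a \<or> \<not> R y b" using unique_common_neighbour[OF xy ab(2) _ ab(3)] ab(1) by blast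
  then show ?thesis using ab edge_target_in by blast
qed

lemma common_non_neighbour:
  assumes x: "x \<in> X" and y: "y \<in> X" and xy: "x \<noteq> y" and s: "side x = side y"
  shows "\<exists>m\<in>X. \<not> R x m \<and> \<not> R y m \<and> side m \<noteq> side x"
proof -
  obtain l where l: "R x l" "R y l" using common_neighbour[OF x y xy s] by blast
  obtain w where w: "w \<in> X" "side w \<noteq> side l" "\<not> R l w" using far_vertex[OF edge_target_in[OF l(1)]] by blast
  have wx: "w \<noteq> x" "w \<noteq> y" using w(3) sym[OF l(1)] sym[OF l(2)] by blast+
  have sw: "side w = side x" using w(2) side_neq[OF l(1)] by auto
  obtain m1 where m1: "R w m1" "R x m1" using common_neighbour[OF w(1) x wx(1) sw] by blast
  obtain m2 where m2: "R w m2" "R y m2" using common_neighbour[OF w(1) y wx(2)] sw s by auto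
  obtain a b c where "a \<noteq> b" "a \<noteq> c" "b \<noteq> c" "R w a" "R w b" "R w c"
    using three_neighbours[OF w(1)] by blast
  moreover obtain m where "m \<in> {a, b, c}" "m \<noteq> m1" "m \<noteq> m2"
    using three_distinct_avoid calculation(1-3) by blast
  ultimately have m: "R w m" "m \<noteq> m1" "m \<noteq> m2" by blast+
  have "\<not> R x m" using unique_common_neighbour[OF wx(1) m(1) _ m1(1) m1(2)] m by blast
  moreover have "\<not> R y m" using unique_common_neighbour[OF wx(2) m(1) _ m2(1) m2(2)] m by blast
  moreover have "side m \<noteq> side x" using side_neq[OF m(1)] sw by auto
  ultimately show ?thesis using edge_target_in[OF m(1)] by blast
qed

lemmas type_of_pair_iffs = type_of_pair_Adjacent_iff[OF bipartite]
  type_of_pair_Same_Side_iff[OF bipartite] type_of_pair_Opposite_Side_iff[OF bipartite]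

lemma realize_Same_Side_Adjacent:
  "x \<in> X \<Longrightarrow> y \<in> X \<Longrightarrow> side x \<noteq> side y \<Longrightarrow> \<exists>z\<in>X. ty x z = Same_Side \<and> ty y z = Adjacent"
proof -
  assume x: "x \<in> X" and y: "y \<in> X" and s: "side x \<noteq> side y"
  obtain z where z: "R y z" "z \<noteq> x" using neighbour_avoiding[OF y] by blast
  have "side z = side x" using side_neq[OF z(1)] s by auto
  then show ?thesis using z edge_target_in[OF z(1)] by (intro bexI[of _ z]) (auto simp: type_of_pair_iffs)
qed

lemma realize_Same_Side_Opposite_Side:
  "x \<in> X \<Longrightarrow> y \<in> X \<Longrightarrow> side x \<noteq> side y \<Longrightarrow> \<exists>z\<in>X. ty x z = Same_Side \<and> ty y z = Opposite_Side"
proof -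
  assume x: "x \<in> X" and y: "y \<in> X" and s: "side x \<noteq> side y"
  obtain w where w: "w \<in> X" "side w \<noteq> side y" "\<not> R y w" using far_vertex[OF y] by blast
  have sw: "side w = side x" using w s by auto
  show ?thesis
  proof (cases "w = x")
    case False
    then show ?thesis using w sw by (intro bexI[of _ w]) (auto simp: type_of_pair_iffs)
  next
    case True
    \<comment> \<open>then y and x are not adjacent, and two neighbours of a neighbour of x cannot both see y\<close>
    obtain m where m: "R x m" using neighbour_avoiding[OF x] by blast
    have my: "m \<noteq> y" using w(3) True sym[OF m] by blast
    obtain a b where ab: "a \<noteq> b" "R m a" "R m b" "a \<noteq> x" "b \<noteq> x"
      using neighbour_avoiding[OF edge_target_in[OF m]] by blast
    have "side a = side x" "side b = side x"
      using side_neq[OF m] side_neq[OF ab(2)] side_neq[OF ab(3)] by auto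
    moreover have "a \<in> X" "b \<in> X" using ab edge_target_in by blast+
    moreover have "\<not> R y a \<or> \<not> R y b"
    proof (rule ccontr)
      assume "\<not> (\<not> R y a \<or> \<not> R y b)"
      then have "m = y"
        using unique_common_neighbour[OF ab(1) sym[OF ab(2)] sym[OF ab(3)]] sym[of y a] sym[of y b] by blast
      then show False using my by blast
    qed
    ultimately show ?thesis using ab(4,5) s
      by (elim disjE; intro bexI[of _ a] bexI[of _ b]) (auto simp: type_of_pair_iffs)
  qed
qed

lemma realizes_single: "x \<in> X \<Longrightarrow> realizes X side R x x Adjacent Adjacent \<and>
    realizes X side R x x Same_Side Same_Side \<and> realizes X side R x x Opposite_Side Opposite_Side"
proof -
  assume x: "x \<in> X"
  obtain a where a: "R x a" using neighbour_avoiding[OF x] by blast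
  obtain b where b: "b \<in> X" "b \<noteq> x" "side b = side x" using same_side_other[OF x, of x] by blast
  obtain c where c: "c \<in> X" "side c \<noteq> side x" "\<not> R x c" using far_vertex[OF x] by blast
  have "realizes X side R x x Adjacent Adjacent"
    using edge_target_in[OF a] a by (intro realizesI[of a]) (simp_all add: type_of_pair_iffs)
  moreover have "realizes X side R x x Same_Side Same_Side"
    using b by (intro realizesI[of b]) (simp_all add: type_of_pair_iffs)
  moreover have "realizes X side R x x Opposite_Side Opposite_Side"
    using c by (intro realizesI[of c]) (simp_all add: type_of_pair_iffs)
  ultimately show ?thesis by blast
qed

lemma realizes_same_side:
  assumes x: "x \<in> X" and y: "y \<in> X" and xy: "x \<noteq> y" and s: "side x = side y"
  shows "realizes X side R x y Adjacent Adjacent \<and> realizes X side R x y Same_Side Same_Side \<and>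
    realizes X side R x y Opposite_Side Opposite_Side \<and> realizes X side R x y Adjacent Opposite_Side"
proof -
  obtain z1 where z1: "R x z1" "R y z1" using common_neighbour[OF x y xy s] by blast
  obtain z2 where z2: "z2 \<in> X" "z2 \<noteq> x" "z2 \<noteq> y" "side z2 = side x" using same_side_other[OF x] by blast
  obtain z3 where z3: "z3 \<in> X" "\<not> R x z3" "\<not> R y z3" "side z3 \<noteq> side x"
    using common_non_neighbour[OF x y xy s] by blast
  obtain z4 where z4: "z4 \<in> X" "R x z4" "\<not> R y z4" using neighbour_not_shared[OF x xy] by blast
  have "side z4 \<noteq> side y" using side_neq[OF z4(2)] s by simp
  have "realizes X side R x y Adjacent Adjacent"
    using z1 edge_target_in[OF z1(1)] by (intro realizesI[of z1]) (simp_all add: type_of_pair_iffs)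
  moreover have "realizes X side R x y Same_Side Same_Side"
    using z2 s by (intro realizesI[of z2]) (simp_all add: type_of_pair_iffs)
  moreover have "realizes X side R x y Opposite_Side Opposite_Side"
    using z3 s by (intro realizesI[of z3]) (simp_all add: type_of_pair_iffs)
  moreover have "realizes X side R x y Adjacent Opposite_Side"
    using z4 \<open>side z4 \<noteq> side y\<close> by (intro realizesI[of z4]) (simp_all add: type_of_pair_iffs)
  ultimately show ?thesis by blast
qed

theorem extension_property: "extension_property X side R"
  using realizes_single realizes_same_side realize_Same_Side_Adjacent realize_Same_Side_Opposite_Side
  by (intro extension_propertyI[OF bipartite]) (simp_all add: realizes_def)

lemma rich_graphI: "finite X \<Longrightarrow> \<forall>x\<in>X. d \<le> card {y. R x y} \<Longrightarrow> rich_graph X side R d"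
  unfolding rich_graph_def using nonempty edge_source_in edge_target_in bipartite extension_property by blast

end

section \<open>The projective plane over the integers modulo a prime\<close>

lemma cong_solve_prime:
  fixes p d c :: int
  assumes "prime p" "\<not> p dvd d"
  shows "\<exists>m. 0 \<le> m \<and> m < p \<and> [m * d = c] (mod p)"
proof -
  have "coprime d p" using assms coprime_commute prime_imp_coprime_int by blast
  then obtain x where x: "[d * x = 1] (mod p)" using cong_solve_coprime_int by blast
  have "[(c * x) mod p * d = c * (d * x)] (mod p)"
    by (simp add: cong_def mod_mult_right_eq mult.commute mult.left_commute)
  also have "[c * (d * x) = c * 1] (mod p)" using x by (rule cong_scalar_left)
  finally show ?thesis
    using assms(1) prime_gt_0_int[OF assms(1)] by (intro exI[of _ "(c * x) mod p"]) simp
qed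

lemma cong_affine_cancel_right:
  fixes p :: int
  shows "[y = m * x + b] (mod p) \<Longrightarrow> [y = m * x + b'] (mod p) \<Longrightarrow> [b = b'] (mod p)"
  by (meson cong_add_lcancel cong_sym_eq cong_trans)

lemma cong_affine_cancel_left:
  fixes p :: int
  assumes "[y = m * x + b] (mod p)" "[y' = m * x + b] (mod p)"
  shows "[y = y'] (mod p)"
  using cong_trans[OF assms(1) cong_sym[OF assms(2)]] .

lemma cong_two_affine:
  fixes p :: int
  assumes "prime p"
    and "[y1 = m * x1 + b] (mod p)" "[y2 = m * x2 + b] (mod p)"
    and "[y1 = m' * x1 + b'] (mod p)" "[y2 = m' * x2 + b'] (mod p)"
  shows "[m = m'] (mod p) \<or> [x1 = x2] (mod p)"
proof -
  have "[m * x1 + b = m' * x1 + b'] (mod p)" "[m * x2 + b = m' * x2 + b'] (mod p)"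
    using cong_trans[OF cong_sym[OF assms(2)] assms(4)] cong_trans[OF cong_sym[OF assms(3)] assms(5)] .
  then have "p dvd (m * x1 + b - (m' * x1 + b')) - (m * x2 + b - (m' * x2 + b'))"
    unfolding cong_iff_dvd_diff by (rule dvd_diff)
  moreover have "(m * x1 + b - (m' * x1 + b')) - (m * x2 + b - (m' * x2 + b')) = (m - m') * (x1 - x2)"
    by (simp add: algebra_simps)
  ultimately have "p dvd (m - m') \<or> p dvd (x1 - x2)" using assms(1) by (simp add: prime_dvd_mult_iff)
  then show ?thesis by (simp add: cong_iff_dvd_diff)
qed

lemma cong_polar:
  fixes p :: int
  shows "[- b = x * m + (- y) mod p] (mod p) \<longleftrightarrow> [y = m * x + b] (mod p)"
proof -
  have "[- b = x * m + (- y) mod p] (mod p) \<longleftrightarrow> [- b = x * m + - y] (mod p)"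
    by (simp add: cong_def mod_add_right_eq)
  also have "\<dots> \<longleftrightarrow> [y = m * x + b] (mod p)"
    by (simp add: cong_iff_dvd_diff algebra_simps)
  finally show ?thesis .
qed

text \<open>As points, Affine x y is (x, y), Ideal m is the point at infinity of slope m and Ideal_Inf
  the vertical direction; as lines, Affine m b is y = m x + b, Ideal c is x = c and Ideal_Inf is
  the line at infinity. The map polar exchanges the roles of points and lines.\<close>

datatype proj = Affine int int | Ideal int | Ideal_Inf

fun reduced :: "int \<Rightarrow> proj \<Rightarrow> bool" where
  "reduced p (Affine a b) \<longleftrightarrow> 0 \<le> a \<and> a < p \<and> 0 \<le> b \<and> b < p"
| "reduced p (Ideal a) \<longleftrightarrow> 0 \<le> a \<and> a < p"
| "reduced p Ideal_Inf \<longleftrightarrow> True"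

fun incident :: "int \<Rightarrow> proj \<Rightarrow> proj \<Rightarrow> bool" where
  "incident p (Affine x y) (Affine m b) \<longleftrightarrow> [y = m * x + b] (mod p)"
| "incident p (Affine x y) (Ideal c) \<longleftrightarrow> x = c"
| "incident p (Ideal m) (Affine m' b) \<longleftrightarrow> m = m'"
| "incident p (Ideal m) Ideal_Inf \<longleftrightarrow> True"
| "incident p Ideal_Inf (Ideal c) \<longleftrightarrow> True"
| "incident p Ideal_Inf Ideal_Inf \<longleftrightarrow> True"
| "incident p _ _ \<longleftrightarrow> False"

fun polar :: "int \<Rightarrow> proj \<Rightarrow> proj" where
  "polar p (Affine a b) = Affine a ((- b) mod p)"
| "polar p u = u"

context
  fixes p :: int
  assumes prime: "prime p"
begin

lemma reduced_polar: "reduced p u \<Longrightarrow> reduced p (polar p u)"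
  using prime_gt_0_int[OF prime] by (cases u) simp_all

lemma polar_polar: "reduced p u \<Longrightarrow> polar p (polar p u) = u"
  by (cases u) (simp_all add: mod_minus_eq)

lemma incident_polar: "incident p (polar p v) (polar p u) \<longleftrightarrow> incident p u v"
  by (cases u; cases v) (auto simp: cong_polar)

lemma exists_line_through_affine:
  assumes u: "reduced p (Affine x1 y1)" and v: "reduced p (Affine x2 y2)" and "x1 \<noteq> x2"
  shows "\<exists>L. reduced p L \<and> incident p (Affine x1 y1) L \<and> incident p (Affine x2 y2) L"
proof -
  have "\<not> p dvd (x1 - x2)" using u v \<open>x1 \<noteq> x2\<close> cong_less_imp_eq_int[of x1 p x2]
    by (auto simp: cong_iff_dvd_diff)
  then obtain m where m: "0 \<le> m" "m < p" "[m * (x1 - x2) = y1 - y2] (mod p)"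
    using cong_solve_prime[OF prime] by blast
  define b where "b = (y1 - m * x1) mod p"
  have b: "0 \<le> b" "b < p" using prime_gt_0_int[OF prime] unfolding b_def by simp_all
  have "[y1 = m * x1 + b] (mod p)"
    unfolding b_def by (simp add: cong_def mod_add_right_eq)
  moreover have "[y2 = m * x2 + b] (mod p)"
  proof -
    have "[m * x2 + b = m * x2 + (y1 - m * x1)] (mod p)"
      unfolding b_def by (simp add: cong_def mod_add_right_eq)
    also have "m * x2 + (y1 - m * x1) = y1 - m * (x1 - x2)" by (simp add: algebra_simps)
    also have "[y1 - m * (x1 - x2) = y1 - (y1 - y2)] (mod p)" using m(3) by (intro cong_diff) simp_all
    finally show ?thesis by (simp add: cong_sym_eq)
  qed
  ultimately show ?thesis using m b by (intro exI[of _ "Affine m b"]) simp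
qed

lemma exists_line_through:
  assumes "reduced p u" "reduced p v"
  shows "\<exists>L. reduced p L \<and> incident p u L \<and> incident p v L"
proof -
  have line_through_affine_ideal:
    "\<exists>L. reduced p L \<and> incident p (Affine x y) L \<and> incident p (Ideal m) L"
    if "reduced p (Ideal m)" for x y m
  proof -
    have "[y = m * x + (y - m * x) mod p] (mod p)" by (simp add: cong_def mod_add_right_eq)
    then show ?thesis using that prime_gt_0_int[OF prime]
      by (intro exI[of _ "Affine m ((y - m * x) mod p)"]) simp
  qed
  then have line_through_ideal_affine:
    "\<exists>L. reduced p L \<and> incident p (Ideal m) L \<and> incident p (Affine x y) L"
    if "reduced p (Ideal m)" for x y m
    using that by blast
  show ?thesis
  proof (cases u; cases v)
    fix x1 y1 x2 y2 assume uv: "u = Affine x1 y1" "v = Affine x2 y2"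
    show ?thesis
    proof (cases "x1 = x2")
      case True
      then show ?thesis using assms uv by (intro exI[of _ "Ideal x1"]) simp
    next
      case False
      then show ?thesis using exists_line_through_affine assms uv by simp
    qed
  qed (use assms line_through_affine_ideal line_through_ideal_affine in \<open>auto intro: exI[of _ Ideal_Inf] exI[of _ "Ideal _"]\<close>)
qed


lemma residue_eq_if_cong_affine:
  assumes "0 \<le> y1" "y1 < p" "0 \<le> y2" "y2 < p" "[y1 = m * x + b] (mod p)" "[y2 = m * x + b] (mod p)"
  shows "y1 = y2"
  using cong_less_imp_eq_int[OF assms(1-4) cong_affine_cancel_left[OF assms(5,6)]] .

lemma intercept_eq_if_cong_affine:
  assumes "0 \<le> b" "b < p" "0 \<le> b'" "b' < p" "[y = m * x + b] (mod p)" "[y = m * x + b'] (mod p)"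
  shows "b = b'"
  using cong_less_imp_eq_int[OF assms(1-4) cong_affine_cancel_right[OF assms(5,6)]] .

lemma affine_lines_eq:
  assumes u: "reduced p u" and v: "reduced p v" and "u \<noteq> v"
    and L: "reduced p (Affine m b)" "reduced p (Affine m' b')"
    and inc: "incident p u (Affine m b)" "incident p v (Affine m b)"
      "incident p u (Affine m' b')" "incident p v (Affine m' b')"
  shows "m = m' \<and> b = b'"
proof (cases "\<exists>x1 y1 x2 y2. u = Affine x1 y1 \<and> v = Affine x2 y2")
  case True
  then obtain x1 y1 x2 y2 where uv: "u = Affine x1 y1" "v = Affine x2 y2" by blast
  have "x1 \<noteq> x2"
  proof
    assume "x1 = x2"
    then have "y1 = y2" using u v inc uv by (auto intro: residue_eq_if_cong_affine)
    then show False using \<open>u \<noteq> v\<close> uv \<open>x1 = x2\<close> by simp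
  qed
  then have "\<not> [x1 = x2] (mod p)" using u v uv cong_less_imp_eq_int[of x1 p x2] by auto
  then have "m = m'"
    using cong_two_affine[OF prime, of y1 m x1 b y2 x2 m' b'] inc uv L cong_less_imp_eq_int[of m p m']
    by auto
  then show ?thesis using L inc uv by (auto intro: intercept_eq_if_cong_affine)
next
  case False
  \<comment> \<open>one of the two points is the ideal point of both lines, so the slopes agree\<close>
  then obtain k where "u = Ideal k \<or> v = Ideal k"
    using inc by (cases u; cases v) auto
  then have "m = m'" using inc by auto
  moreover have "b = b'"
  proof (cases u; cases v)
  qed (use inc L \<open>u \<noteq> v\<close> \<open>m = m'\<close> in \<open>auto intro: intercept_eq_if_cong_affine\<close>)
  ultimately show ?thesis ..
qed

lemma unique_line_through:
  assumes u: "reduced p u" and v: "reduced p v" and "u \<noteq> v"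
    and L: "reduced p L" "reduced p L'"
    and inc: "incident p u L" "incident p v L" "incident p u L'" "incident p v L'"
  shows "L = L'"
proof (cases L; cases L')
  fix m b m' b' assume "L = Affine m b" "L' = Affine m' b'"
  then show ?thesis using affine_lines_eq[OF u v \<open>u \<noteq> v\<close>] L inc by simp
qed (use u v \<open>u \<noteq> v\<close> inc in \<open>(cases u; cases v; auto intro: residue_eq_if_cong_affine)+\<close>)


end

definition plane :: "int \<Rightarrow> (bool \<times> proj) set" where
  "plane p = UNIV \<times> {u. reduced p u}"

definition plane_adj :: "int \<Rightarrow> bool \<times> proj \<Rightarrow> bool \<times> proj \<Rightarrow> bool" where
  "plane_adj p x y \<longleftrightarrow> reduced p (snd x) \<and> reduced p (snd y) \<and> fst x \<noteq> fst y \<and>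
     (if fst x then incident p (snd x) (snd y) else incident p (snd y) (snd x))"

definition polarity :: "int \<Rightarrow> bool \<times> proj \<Rightarrow> bool \<times> proj" where
  "polarity p x = (\<not> fst x, polar p (snd x))"

lemma plane_iff [simp]: "(s, u) \<in> plane p \<longleftrightarrow> reduced p u"
  by (simp add: plane_def)

lemma plane_adj_iff [simp]:
  "plane_adj p (s, u) (s', v) \<longleftrightarrow> reduced p u \<and> reduced p v \<and> s \<noteq> s' \<and>
     (if s then incident p u v else incident p v u)"
  by (simp add: plane_adj_def)

lemma plane_adj_in_plane: "plane_adj p x y \<Longrightarrow> x \<in> plane p \<and> y \<in> plane p"
  by (cases x; cases y) simp

lemma bipartite_plane: "bipartite fst (plane_adj p)"
  unfolding bipartite_def plane_adj_def by auto

lemma card_three_distinct: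
  assumes "3 \<le> card S"
  obtains a b c where "a \<in> S" "b \<in> S" "c \<in> S" "a \<noteq> b" "a \<noteq> c" "b \<noteq> c"
proof -
  obtain T where "T \<subseteq> S" "card T = 3" using obtain_subset_with_card_n[OF assms] by blast
  then show thesis using that by (auto simp: card_3_iff)
qed

context
  fixes p :: int
  assumes prime: "prime p"
begin

lemma finite_plane: "finite (plane p)"
proof -
  have "{u. reduced p u} \<subseteq> (\<lambda>(a, b). Affine a b) ` ({0..<p} \<times> {0..<p}) \<union> Ideal ` {0..<p} \<union> {Ideal_Inf}"
  proof
    fix u assume "u \<in> {u. reduced p u}"
    then show "u \<in> (\<lambda>(a, b). Affine a b) ` ({0..<p} \<times> {0..<p}) \<union> Ideal ` {0..<p} \<union> {Ideal_Inf}"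
      by (cases u) auto
  qed
  then have "finite {u. reduced p u}" by (rule finite_subset) simp
  then show ?thesis unfolding plane_def by simp
qed

lemma polarity_in_plane: "x \<in> plane p \<Longrightarrow> polarity p x \<in> plane p"
  using reduced_polar[OF prime] by (cases x) (simp add: polarity_def)

lemma polarity_polarity: "x \<in> plane p \<Longrightarrow> polarity p (polarity p x) = x"
  using polar_polar[OF prime] by (cases x) (simp add: polarity_def)

lemma plane_adj_polarity:
  assumes "x \<in> plane p" "y \<in> plane p"
  shows "plane_adj p (polarity p x) (polarity p y) \<longleftrightarrow> plane_adj p x y"
  using assms reduced_polar[OF prime] incident_polar[OF prime]
  by (cases x; cases y) (auto simp: polarity_def)

lemma card_neighbours_polarity:
  assumes x: "x \<in> plane p"
  shows "card {y. plane_adj p (polarity p x) y} = card {y. plane_adj p x y}"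
proof -
  have "{y. plane_adj p (polarity p x) y} = polarity p ` {y. plane_adj p x y}"
  proof (intro equalityI subsetI)
    fix y assume "y \<in> {y. plane_adj p (polarity p x) y}"
    then have "y \<in> plane p" "plane_adj p (polarity p x) y" using plane_adj_in_plane by blast+
    then show "y \<in> polarity p ` {y. plane_adj p x y}"
      using plane_adj_polarity[OF x polarity_in_plane] polarity_polarity
      by (metis image_eqI mem_Collect_eq)
  qed (use x plane_adj_polarity plane_adj_in_plane in blast)
  moreover have "inj_on (polarity p) {y. plane_adj p x y}"
    using polarity_polarity plane_adj_in_plane by (metis inj_onI mem_Collect_eq)
  ultimately show ?thesis by (simp add: card_image)
qed

lemma card_points_on_line:
  assumes "reduced p L"
  shows "nat p \<le> card {y. plane_adj p (False, L) y}"
proof -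
  have "\<exists>f. inj_on f {0..<p} \<and> f ` {0..<p} \<subseteq> {y. plane_adj p (False, L) y}"
  proof (cases L)
    case (Affine m b)
    have "[(m * t + b) mod p = m * t + b] (mod p)" for t by simp
    then show ?thesis
      using assms Affine prime_gt_0_int[OF prime]
      by (intro exI[of _ "\<lambda>t. (True, Affine t ((m * t + b) mod p))"]) (auto simp: inj_on_def cong_sym_eq)
  next
    case (Ideal c)
    then show ?thesis using assms
      by (intro exI[of _ "\<lambda>t. (True, Affine c t)"]) (auto simp: inj_on_def)
  next
    case Ideal_Inf
    then show ?thesis by (intro exI[of _ "\<lambda>t. (True, Ideal t)"]) (auto simp: inj_on_def)
  qed
  then obtain f where f: "inj_on f {0..<p}" "f ` {0..<p} \<subseteq> {y. plane_adj p (False, L) y}" by blast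
  have "finite {y. plane_adj p (False, L) y}"
    using finite_plane plane_adj_in_plane by (blast intro: finite_subset)
  then have "card (f ` {0..<p}) \<le> card {y. plane_adj p (False, L) y}" using f(2) by (rule card_mono)
  then show ?thesis using card_image[OF f(1)] by simp
qed

lemma card_neighbours_plane:
  assumes x: "x \<in> plane p"
  shows "nat p \<le> card {y. plane_adj p x y}"
proof (cases "fst x")
  case True
  then have "x = polarity p (False, polar p (snd x))"
    using x polar_polar[OF prime] by (cases x) (simp add: polarity_def)
  moreover have "reduced p (polar p (snd x))" using x reduced_polar[OF prime] by (cases x) simp
  ultimately show ?thesis
    using card_neighbours_polarity[of "(False, polar p (snd x))"] card_points_on_line by simp
next
  case False
  then show ?thesis using x card_points_on_line by (cases x) simp
qed

lemma common_neighbour_points: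
  assumes x: "x \<in> plane p" and y: "y \<in> plane p" and "fst x" "fst y"
  shows "\<exists>z. plane_adj p x z \<and> plane_adj p y z"
proof -
  obtain L where "reduced p L" "incident p (snd x) L" "incident p (snd y) L"
    using exists_line_through[OF prime] x y by (cases x; cases y) auto
  then show ?thesis using x y \<open>fst x\<close> \<open>fst y\<close>
    by (cases x; cases y) (auto intro!: exI[of _ "(False, L)"])
qed

lemma common_neighbour_plane:
  assumes x: "x \<in> plane p" and y: "y \<in> plane p" and "fst x = fst y"
  shows "\<exists>z. plane_adj p x z \<and> plane_adj p y z"
proof (cases "fst x")
  case True
  then show ?thesis using common_neighbour_points[OF x y] \<open>fst x = fst y\<close> by simp
next
  case False
  then obtain z where z: "plane_adj p (polarity p x) z" "plane_adj p (polarity p y) z"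
    using common_neighbour_points[OF polarity_in_plane[OF x] polarity_in_plane[OF y]] \<open>fst x = fst y\<close>
    by (auto simp: polarity_def)
  then have "z \<in> plane p" using plane_adj_in_plane by blast
  then have "plane_adj p x (polarity p z) \<and> plane_adj p y (polarity p z)"
    using z plane_adj_polarity[OF x polarity_in_plane] plane_adj_polarity[OF y polarity_in_plane]
      polarity_polarity by simp
  then show ?thesis by blast
qed

lemma no_C4_plane:
  assumes ab: "plane_adj p a b" and bc: "plane_adj p b c" and ce: "plane_adj p c e" and ea: "plane_adj p e a"
  shows "a = c \<or> b = e"
proof -
  obtain s u where a: "a = (s, u)" by (cases a)
  obtain s' v where c': "c = (s', v)" by (cases c)
  have c: "c = (s, v)" using ab bc a c' by (cases b) auto
  obtain L where b: "b = (\<not> s, L)" using ab a by (cases b) auto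
  obtain L' where e: "e = (\<not> s, L')" using ea a by (cases e) auto
  show ?thesis
  proof (cases s)
    case True
    then have "u \<noteq> v \<Longrightarrow> L = L'"
      using ab bc ce ea a b c e by (intro unique_line_through[OF prime, of u v]) auto
    then show ?thesis using a b c e by auto
  next
    case False
    then have "L \<noteq> L' \<Longrightarrow> u = v"
      using ab bc ce ea a b c e by (intro unique_line_through[OF prime, of L L']) auto
    then show ?thesis using a b c e by auto
  qed
qed

theorem projective_plane_graph_plane:
  assumes "3 \<le> p"
  shows "projective_plane_graph (plane p) fst (plane_adj p)"
proof
  show "bipartite fst (plane_adj p)" by (rule bipartite_plane)
  show "plane_adj p x y \<Longrightarrow> x \<in> plane p" for x y using plane_adj_in_plane by blast
  show "\<exists>z. plane_adj p x z \<and> plane_adj p y z" if "x \<in> plane p" "y \<in> plane p" "fst x = fst y" for x y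
    using common_neighbour_plane that by blast
  show "a = c \<or> b = e"
    if "plane_adj p a b" "plane_adj p b c" "plane_adj p c e" "plane_adj p e a" for a b c e
    using no_C4_plane that by blast
  show "\<exists>a b c. a \<noteq> b \<and> a \<noteq> c \<and> b \<noteq> c \<and> plane_adj p x a \<and> plane_adj p x b \<and> plane_adj p x c"
    if "x \<in> plane p" for x
  proof -
    have "3 \<le> card {y. plane_adj p x y}" using card_neighbours_plane[OF that] assms by linarith
    then show ?thesis by (rule card_three_distinct) blast
  qed
  have "(True, Ideal_Inf) \<in> plane p" by simp
  then show "plane p \<noteq> {}" by blast
qed

corollary rich_graph_plane:
  assumes "3 \<le> p" "d \<le> nat p"
  shows "rich_graph (plane p) fst (plane_adj p) d"
proof -
  interpret projective_plane_graph "plane p" fst "plane_adj p"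
    by (rule projective_plane_graph_plane[OF assms(1)])
  show ?thesis using finite_plane card_neighbours_plane assms(2) by (intro rich_graphI) (auto intro: le_trans)
qed

corollary not_has_C4_plane:
  assumes "3 \<le> p"
  shows "\<not> has_C4 (plane p) (plane_adj p)"
  using projective_plane_graph.not_has_C4[OF projective_plane_graph_plane[OF assms]] .

end

lemma rich_graph_two_connected_treewidth:
  assumes "simple_graph V E" "rich_graph V side E k"
  shows "two_connected V E" "k \<le> treewidth V E"
  using assms extension_property_two_connected treewidth_ge_min_degree
  unfolding rich_graph_def by blast+

lemma rich_graphs_defeat_3_variable_sentences:
  assumes G: "rich_graph X side R k" "has_C4 X R"
    and H: "rich_graph Y side' R' k" "\<not> has_C4 Y R'"
    and \<Phi>: "sentence \<Phi>" "var_width \<Phi> \<le> 3"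
  obtains V E where "simple_graph V E" "two_connected V E" "k \<le> treewidth V E"
    "models V E \<Phi> \<noteq> contains_subgraph V E C4_V C4_E"
proof -
  obtain V1 s1 E1 where G1: "simple_graph V1 E1" "rich_graph V1 s1 E1 k" "has_C4 V1 E1"
    using rich_graph_on_nat[OF G(1)] G(2) by metis
  obtain V2 s2 E2 where H2: "simple_graph V2 E2" "rich_graph V2 s2 E2 k" "\<not> has_C4 V2 E2"
    using rich_graph_on_nat[OF H(1)] H(2) by metis
  have "models V1 E1 \<Phi> \<longleftrightarrow> models V2 E2 \<Phi>"
    using G1(2) H2(2) \<Phi> unfolding rich_graph_def by (intro models_eq_if_extension_property) blast+
  then have "models V1 E1 \<Phi> \<noteq> contains_subgraph V1 E1 C4_V C4_E \<or>
      models V2 E2 \<Phi> \<noteq> contains_subgraph V2 E2 C4_V C4_E"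
    using G1 H2 contains_C4_iff_has_C4 by blast
  then show thesis
    using that G1 H2 rich_graph_two_connected_treewidth by metis
qed

theorem proposition18:
  shows "W'_tw C4_V C4_E = 4"
proof -
  let ?detects = "\<lambda>\<Phi> k. \<forall>V E. simple_graph V E \<and> two_connected V E \<and> treewidth V E \<ge> k \<longrightarrow>
      (models V E \<Phi> \<longleftrightarrow> contains_subgraph V E C4_V C4_E)"
  have "?detects C4_sentence 0"
    using models_C4_sentence_iff contains_C4_iff_has_C4 by blast
  then have upper: "\<exists>\<Phi> k. sentence \<Phi> \<and> var_width \<Phi> = 4 \<and> ?detects \<Phi> k"
    using sentence_C4_sentence var_width_C4_sentence by blast
  have lower: "4 \<le> m" if width_m: "\<exists>\<Phi> k. sentence \<Phi> \<and> var_width \<Phi> = m \<and> ?detects \<Phi> k" for m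
  proof (rule ccontr)
    assume "\<not> 4 \<le> m"
    obtain \<Phi> k where \<Phi>: "sentence \<Phi>" "var_width \<Phi> \<le> 3" and detects: "?detects \<Phi> k"
      using width_m \<open>\<not> 4 \<le> m\<close> by fastforce
    obtain q :: nat where q: "prime q" "k + 3 < q" using bigger_prime by blast
    have "rich_graph (double_grid (k + 4)) fst (double_grid_adj (k + 4)) k"
      "has_C4 (double_grid (k + 4)) (double_grid_adj (k + 4))"
      by (simp_all add: rich_graph_double_grid has_C4_double_grid)
    moreover have "rich_graph (plane (int q)) fst (plane_adj (int q)) k"
      "\<not> has_C4 (plane (int q)) (plane_adj (int q))"
      using q by (simp_all add: rich_graph_plane not_has_C4_plane)
    ultimately show False
      using rich_graphs_defeat_3_variable_sentences[OF _ _ _ _ \<Phi>] detects by metis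
  qed
  show ?thesis
    unfolding W'_tw_def using upper lower by (rule Least_equality)
qed

end
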